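(* Let $\mathbb X,\mathbb H,\mathbb Y$ be separable real Hilbert spaces, $\mathbf W\colon\mathbb X\to\mathbb H$ and $\mathbf A\colon\mathbb H\to\mathbb Y$ bounded linear operators, $\mathcal R\colon\mathbb X\to[0,\infty]$ proper, convex and weakly lower semicontinuous, $(\phi_\lambda)_{\lambda\in\Lambda}$ an orthonormal basis of $\mathbb H$ indexed by a countable set $\Lambda$, and $(\kappa_\lambda)_{\lambda\in\Lambda}$ weights with $\kappa_\lambda\ge a$ for all $\lambda$, for some $a>0$. Assume there is $x\in\mathbb X$ with $\mathcal R(x)+\|\mathbf W x\|_{1,\kappa}<\infty$. Suppose $(x_\star,h_\star,y_\star)\in\mathbb X\times\mathbb H\times\mathbb Y$ satisfies the following: (1.1) $\mathbf W x_\star=h_\star$ and $\mathbf A h_\star=y_\star$; (1.2) there is $u\in\mathbb H$ with $\mathbf W^*u\in\partial\mathcal R(x_\star)$; (1.3) there is $v\in\mathbb Y$ with $\eta:=\mathbf A^*v-u\in\partial\|\cdot\|_{1,\kappa}(h_\star)$; (1.4) the restriction $\mathbf A_{\Omega[\eta]}\colon\mathbb H_{\Omega[\eta]}\to\mathbb Y$ is injective. Let $C>0$. Then for every $\delta>0$, every $y^\delta\in\mathbb Y$ with $\|y^\delta-y_\star\|\le\delta$, $\alpha=C\delta$, and every minimizer $(x_\alpha^\delta,h_\alpha^\delta)$ of $$\mathcal B_{\alpha,y^\delta}(x,h)=\tfrac12\|\mathbf W x-h\|^2+\tfrac12\|\mathbf A h-y^\delta\|^2+\alpha\big(\mathcal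 R(x)+\|h\|_{1,\kappa}\big)$$ over $\mathbb X\times\mathbb H$, we have $$\mathcal D^{\mathcal R}_{\mathbf W^*u}(x_\alpha^\delta,x_\star)\le c_{(u,v)}\,\delta,\qquad \|h_\alpha^\delta-h_\star\|\le d_{(u,v)}\,\delta,$$ where $\|(u,v)\|=(\|u\|^2+\|v\|^2)^{1/2}$, $$c_{(u,v)}=\frac{(1+C\|(u,v)\|)^2}{2C},\qquad d_{(u,v)}=2\|\mathbf A_{\Omega[\eta]}^{-1}\|\,(1+C\|(u,v)\|)+\frac{1+\|\mathbf A_{\Omega[\eta]}^{-1}\|\,\|\mathbf A\|}{m[\eta]}\,c_{(u,v)}.$$
   Context: Weighted $\ell^1$ norm: $\|h\|_{1,\kappa}=\sum_{\lambda\in\Lambda}\kappa_\lambda|\langle\phi_\lambda,h\rangle|\in[0,\infty]$ for $h\in\mathbb H$. Subdifferential: $\xi\in\partial\mathcal F(z_\star)$ iff $\mathcal F(z)\ge\mathcal F(z_\star)+\langle\xi,z-z_\star\rangle$ for all $z$. Bregman distance: for $\xi\in\partial\mathcal F(z_\star)$, $\mathcal D^{\mathcal F}_\xi(z,z_\star)=\mathcal F(z)-\mathcal F(z_\star)-\langle\xi,z-z_\star\rangle$. For $\eta=\sum_\lambda\eta_\lambda\phi_\lambda\in\partial\|\cdot\|_{1,\kappa}(h_\star)$ (which forces $|\eta_\lambda|\le\kappa_\lambda$ for all $\lambda$), set $\Omega[\eta]=\{\lambda\in\Lambda: |\eta_\lambda|=\kappa_\lambda\}$ (a finite set) and $m[\eta]=\min\{\kappa_\lambda-|\eta_\lambda|:\lambda\notin\Omega[\eta]\}>0$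 (with the term involving $1/m[\eta]$ read as $0$ if $\Lambda=\Omega[\eta]$). For finite $\Omega\subseteq\Lambda$: $\mathbb H_\Omega=\operatorname{span}\{\phi_\lambda:\lambda\in\Omega\}$, $\mathbf A_\Omega=\mathbf A|_{\mathbb H_\Omega}\colon\mathbb H_\Omega\to\mathbb Y$, and when $\mathbf A_\Omega$ is injective, $\|\mathbf A_\Omega^{-1}\|$ is the operator norm of its inverse $\operatorname{ran}(\mathbf A_\Omega)\to\mathbb H_\Omega$. *)

theory Defs
  imports "HOL-Analysis.Analysis"
begin

definition weakly_conv :: "(nat \<Rightarrow> 'a::real_inner) \<Rightarrow> 'a \<Rightarrow> bool" where
  "weakly_conv xs x \<longleftrightarrow> (\<forall>z. (\<lambda>n. inner (xs n) z) \<longlonglongrightarrow> inner x z)"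

definition proper_fun :: "('a \<Rightarrow> ennreal) \<Rightarrow> bool" where
  "proper_fun R \<longleftrightarrow> (\<exists>x. R x < \<infinity>)"

definition convex_fun :: "('a::real_vector \<Rightarrow> ennreal) \<Rightarrow> bool" where
  "convex_fun R \<longleftrightarrow> (\<forall>x y t. 0 \<le> t \<and> t \<le> 1 \<longrightarrow>
      R (t *\<^sub>R x + (1 - t) *\<^sub>R y) \<le> ennreal t * R x + ennreal (1 - t) * R y)"

definition weakly_lsc :: "('a::real_inner \<Rightarrow> ennreal) \<Rightarrow> bool" where
  "weakly_lsc R \<longleftrightarrow> (\<forall>xs x. weakly_conv xs x \<longrightarrow> R x \<le> liminf (\<lambda>n. R (xs n)))"

definition orthonormal_basis :: "'l set \<Rightarrow> ('l \<Rightarrow> 'a::real_inner) \<Rightarrow> bool" where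
  "orthonormal_basis \<Lambda> \<phi> \<longleftrightarrow>
     (\<forall>i\<in>\<Lambda>. \<forall>j\<in>\<Lambda>. inner (\<phi> i) (\<phi> j) = (if i = j then 1 else 0)) \<and>
     (\<forall>h. (\<forall>i\<in>\<Lambda>. inner (\<phi> i) h = 0) \<longrightarrow> h = 0)"

definition wl1 :: "'l set \<Rightarrow> ('l \<Rightarrow> 'a::real_inner) \<Rightarrow> ('l \<Rightarrow> real) \<Rightarrow> 'a \<Rightarrow> ennreal" where
  "wl1 \<Lambda> \<phi> \<kappa> h = (\<Sum>\<^sub>\<infinity>l\<in>\<Lambda>. ennreal (\<kappa> l * \<bar>inner (\<phi> l) h\<bar>))"

definition subdiff :: "('a::real_inner \<Rightarrow> ereal) \<Rightarrow> 'a \<Rightarrow> 'a set" where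
  "subdiff F z0 = {\<xi>. \<forall>z. F z \<ge> F z0 + ereal (inner \<xi> (z - z0))}"

definition bregman :: "('a::real_inner \<Rightarrow> ereal) \<Rightarrow> 'a \<Rightarrow> 'a \<Rightarrow> 'a \<Rightarrow> ereal" where
  "bregman F \<xi> z z0 = F z - F z0 - ereal (inner \<xi> (z - z0))"

definition Omega :: "'l set \<Rightarrow> ('l \<Rightarrow> 'a::real_inner) \<Rightarrow> ('l \<Rightarrow> real) \<Rightarrow> 'a \<Rightarrow> 'l set" where
  "Omega \<Lambda> \<phi> \<kappa> \<eta> = {l\<in>\<Lambda>. \<bar>inner (\<phi> l) \<eta>\<bar> = \<kappa> l}"

definition mgap :: "'l set \<Rightarrow> ('l \<Rightarrow> 'a::real_inner) \<Rightarrow> ('l \<Rightarrow> real) \<Rightarrow> 'a \<Rightarrow> real" where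
  "mgap \<Lambda> \<phi> \<kappa> \<eta> = Inf ((\<lambda>l. \<kappa> l - \<bar>inner (\<phi> l) \<eta>\<bar>) ` (\<Lambda> - Omega \<Lambda> \<phi> \<kappa> \<eta>))"

definition HOmega :: "('l \<Rightarrow> 'a::real_inner) \<Rightarrow> 'l set \<Rightarrow> 'a set" where
  "HOmega \<phi> \<Omega> = span (\<phi> ` \<Omega>)"

text \<open>Operator norm of the inverse of A restricted to a subspace S (A injective on S),
  as a map ran(A|S) \<rightarrow> S: sup of norm h over h in S with norm (A h) \<le> 1.\<close>
definition inv_opnorm :: "('a::real_normed_vector \<Rightarrow> 'b::real_normed_vector) \<Rightarrow> 'a set \<Rightarrow> real" where
  "inv_opnorm A S = Sup {norm h | h. h \<in> S \<and> norm (A h) \<le> 1}"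

end

theory Submission
  imports Defs
begin

(*
  Comparing the Tikhonov minimiser (xa, ha) with (xs, hs) and inserting the source conditions
  adjoint W u in dR(xs) and eta = adjoint A v - u in d||.||_{1,kappa}(hs) turns the minimality
  inequality into a sum of squares plus alpha times the two Bregman distances.  Completing the
  squares bounds both distances by (delta + alpha ||(u,v)||)^2 / (2 alpha) = c delta, and the
  residual ||A (ha - hs)|| by 2 (delta + alpha ||(u,v)||).
  Since |eta_l| = kappa_l only on the finite set Omega[eta], the l1 Bregman distance dominates
  m[eta] times the l1 mass of ha - hs outside Omega[eta]; on the finite-dimensional span over
  Omega[eta] the injective A has a bounded inverse, which controls the rest of ha - hs by the
  residual.
*)

section \<open>Riesz representation and adjoints\<close>

lemma convex_minimizing_seq_Cauchy:
  fixes x :: "nat \<Rightarrow> 'a::real_inner"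
  assumes "convex S" and x_in: "\<And>n. x n \<in> S" and lower: "\<And>y. y \<in> S \<Longrightarrow> d \<le> norm y"
    and lim: "(\<lambda>n. norm (x n)) \<longlonglongrightarrow> d"
  shows "Cauchy x"
proof (rule metric_CauchyI)
  fix e :: real assume "e > 0"
  have "d \<ge> 0" using lim by (rule LIMSEQ_le_const) simp
  have "(\<lambda>n. (norm (x n))\<^sup>2 - d\<^sup>2) \<longlonglongrightarrow> d\<^sup>2 - d\<^sup>2"
    by (intro tendsto_intros lim)
  moreover have "e\<^sup>2 / 4 > 0" using \<open>e > 0\<close> by simp
  ultimately obtain N where N0: "\<forall>n\<ge>N. norm ((norm (x n))\<^sup>2 - d\<^sup>2 - (d\<^sup>2 - d\<^sup>2)) < e\<^sup>2 / 4"
    by (blast dest: LIMSEQ_D)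
  have N: "(norm (x n))\<^sup>2 - d\<^sup>2 < e\<^sup>2 / 4" if "n \<ge> N" for n
  proof -
    have "norm ((norm (x n))\<^sup>2 - d\<^sup>2 - (d\<^sup>2 - d\<^sup>2)) < e\<^sup>2 / 4" using N0 that by blast
    then show ?thesis by (simp only: diff_self diff_zero real_norm_def abs_less_iff)
  qed
  show "\<exists>N. \<forall>m\<ge>N. \<forall>n\<ge>N. dist (x m) (x n) < e"
  proof (intro exI allI impI)
    fix m n assume "N \<le> m" "N \<le> n"
    have "(1/2) *\<^sub>R (x m + x n) \<in> S"
      using convexD[OF \<open>convex S\<close> x_in x_in, of "1/2" "1/2"] by (simp add: scaleR_add_right)
    then have "2 * d \<le> norm (x m + x n)" using lower[of "(1/2) *\<^sub>R (x m + x n)"] by simp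
    then have "(2 * d)\<^sup>2 \<le> (norm (x m + x n))\<^sup>2" using \<open>d \<ge> 0\<close> by (intro power_mono) auto
    moreover have "(norm (x m - x n))\<^sup>2 + (norm (x m + x n))\<^sup>2 = 2 * (norm (x m))\<^sup>2 + 2 * (norm (x n))\<^sup>2"
      by (simp add: power2_norm_eq_inner inner_diff inner_add inner_commute)
    moreover have "(2 * d)\<^sup>2 = 4 * d\<^sup>2" by simp
    ultimately have "(norm (x m - x n))\<^sup>2 < e\<^sup>2"
      using N[OF \<open>N \<le> m\<close>] N[OF \<open>N \<le> n\<close>] by linarith
    then show "dist (x m) (x n) < e"
      using \<open>e > 0\<close> by (simp add: dist_norm power_less_imp_less_base)
  qed
qed

lemma closed_convex_min_norm_exists:
  fixes S :: "'a::{real_inner,complete_space} set"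
  assumes "closed S" "convex S" "S \<noteq> {}"
  obtains z where "z \<in> S" "\<And>y. y \<in> S \<Longrightarrow> norm z \<le> norm y"
proof -
  define d where "d = Inf (norm ` S)"
  have bdd: "bdd_below (norm ` S)" by (rule bdd_belowI[of _ 0]) auto
  have lower: "d \<le> norm y" if "y \<in> S" for y
    unfolding d_def using bdd that by (simp add: cInf_lower)
  have "\<exists>y\<in>S. norm y < d + 1 / Suc n" for n
    using cInf_lessD[of "norm ` S" "d + 1 / Suc n"] \<open>S \<noteq> {}\<close> by (auto simp: d_def)
  then obtain x where x_in: "\<And>n. x n \<in> S" and x_less: "\<And>n. norm (x n) < d + 1 / Suc n"
    by metis
  have "(\<lambda>n. norm (x n)) \<longlonglongrightarrow> d"
  proof (rule real_tendsto_sandwich)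
    show "\<forall>\<^sub>F n in sequentially. d \<le> norm (x n)" using lower x_in by simp
    show "\<forall>\<^sub>F n in sequentially. norm (x n) \<le> d + 1 / Suc n" using x_less by (simp add: less_imp_le)
    show "(\<lambda>n. d + 1 / Suc n) \<longlonglongrightarrow> d"
      using tendsto_add[OF tendsto_const LIMSEQ_Suc[OF lim_inverse_n']] by simp
  qed simp
  then have "Cauchy x" using \<open>convex S\<close> x_in lower convex_minimizing_seq_Cauchy by blast
  then obtain z where z: "x \<longlonglongrightarrow> z" using Cauchy_convergent_iff convergent_def by blast
  have "z \<in> S" using \<open>closed S\<close> x_in z by (rule closed_sequentially)
  moreover have "norm z = d"
    using tendsto_norm[OF z] \<open>(\<lambda>n. norm (x n)) \<longlonglongrightarrow> d\<close> by (rule LIMSEQ_unique)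
  ultimately show thesis using lower that by simp
qed

lemma min_norm_in_hyperplane_orthogonal:
  fixes f :: "'a::real_inner \<Rightarrow> real"
  assumes "linear f" and "f z = 1" and z_min: "\<And>y. f y = 1 \<Longrightarrow> norm z \<le> norm y" and "f y = 0"
  shows "inner z y = 0"
proof (rule ccontr)
  interpret f: linear f by fact
  assume "inner z y \<noteq> 0"
  then have "y \<noteq> 0" by auto
  define c s where "c = inner z y" and "s = inner y y"
  have "s > 0" using \<open>y \<noteq> 0\<close> by (simp add: s_def)
  define t where "t = - c / s"
  have "f (z + t *\<^sub>R y) = 1" using \<open>f z = 1\<close> \<open>f y = 0\<close> by (simp add: f.add f.scale)
  then have "(norm z)\<^sup>2 \<le> (norm (z + t *\<^sub>R y))\<^sup>2" using z_min by (simp add: power_mono)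
  also have "\<dots> = (norm z)\<^sup>2 + (2 * t * c + t * t * s)"
    by (simp add: power2_norm_eq_inner inner_add inner_commute c_def s_def algebra_simps)
  also have "2 * t * c + t * t * s = - (c * c / s)"
    using \<open>s > 0\<close> by (simp add: t_def field_simps power2_eq_square)
  finally have "c * c / s \<le> 0" by simp
  moreover have "c * c > 0" using \<open>inner z y \<noteq> 0\<close> not_real_square_gt_zero unfolding c_def by blast
  then have "c * c / s > 0" using \<open>s > 0\<close> by simp
  ultimately show False by simp
qed

lemma riesz_representation:
  fixes f :: "'a::{real_inner,complete_space} \<Rightarrow> real"
  assumes "bounded_linear f"
  obtains w where "\<And>x. f x = inner w x"
proof (cases "\<forall>x. f x = 0")
  case True
  then show thesis using that[of 0] by simp
next
  case False
  interpret f: bounded_linear f by fact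
  obtain e where "f e \<noteq> 0" using False by blast
  define S where "S = f -` {1}"
  have "closed S" unfolding S_def by (intro closed_vimage closed_singleton linear_continuous_on assms)
  moreover have "convex S" unfolding S_def by (rule convex_linear_vimage) (simp_all add: f.linear)
  moreover have "e /\<^sub>R f e \<in> S" using \<open>f e \<noteq> 0\<close> by (simp add: S_def f.scaleR)
  then have "S \<noteq> {}" by blast
  ultimately obtain z where "z \<in> S" and z_min: "\<And>y. y \<in> S \<Longrightarrow> norm z \<le> norm y"
    using closed_convex_min_norm_exists by blast
  then have "f z = 1" by (simp add: S_def)
  have "f x = inner (z /\<^sub>R inner z z) x" for x
  proof -
    have "inner z (x - f x *\<^sub>R z) = 0"
      using min_norm_in_hyperplane_orthogonal[OF f.linear \<open>f z = 1\<close>] z_min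
      by (simp add: S_def f.diff f.scaleR \<open>f z = 1\<close>)
    moreover have "inner z z \<noteq> 0" using \<open>f z = 1\<close> f.zero by fastforce
    ultimately show ?thesis by (simp add: inner_diff_right)
  qed
  then show thesis by (rule that)
qed

text \<open>HOL-Analysis proves this only for Euclidean spaces.\<close>

lemma adjoint_inner:
  fixes T :: "'a::{real_inner,complete_space} \<Rightarrow> 'b::real_inner"
  assumes "bounded_linear T"
  shows "inner (T x) y = inner x (adjoint T y)"
proof -
  have "\<forall>y. \<exists>w. \<forall>x. inner (T x) y = inner x w"
  proof
    fix y
    obtain w where "\<And>x. inner (T x) y = inner w x"
      using riesz_representation[OF bounded_linear_compose[OF bounded_linear_inner_left[of y] assms]]
      by blast
    then show "\<exists>w. \<forall>x. inner (T x) y = inner x w" by (auto simp: inner_commute)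
  qed
  then obtain g where "\<forall>y x. inner (T x) y = inner x (g y)" by (rule choice[THEN exE])
  then have "\<exists>g. \<forall>x y. inner (T x) y = inner x (g y)" by blast
  then have "\<forall>x y. inner (T x) y = inner x (adjoint T y)"
    unfolding adjoint_def by (rule someI_ex)
  then show ?thesis by blast
qed

section \<open>Orthonormal bases\<close>

lemma orthonormal_basis_inner:
  "orthonormal_basis \<Lambda> \<phi> \<Longrightarrow> i \<in> \<Lambda> \<Longrightarrow> j \<in> \<Lambda> \<Longrightarrow> inner (\<phi> i) (\<phi> j) = (if i = j then 1 else 0)"
  unfolding orthonormal_basis_def by blast

lemma orthonormal_basis_norm: "orthonormal_basis \<Lambda> \<phi> \<Longrightarrow> l \<in> \<Lambda> \<Longrightarrow> norm (\<phi> l) = 1"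
  using orthonormal_basis_inner[of \<Lambda> \<phi> l l] by (simp add: norm_eq_sqrt_inner)

lemma orthonormal_basis_eqI:
  assumes "orthonormal_basis \<Lambda> \<phi>" and "\<And>l. l \<in> \<Lambda> \<Longrightarrow> inner (\<phi> l) h = inner (\<phi> l) h'"
  shows "h = h'"
  using assms unfolding orthonormal_basis_def by (metis inner_diff_right right_minus_eq)

lemma inner_basis_sum:
  assumes "orthonormal_basis \<Lambda> \<phi>" "finite F" "F \<subseteq> \<Lambda>" "l \<in> \<Lambda>"
  shows "inner (\<phi> l) (\<Sum>k\<in>F. c k *\<^sub>R \<phi> k) = (if l \<in> F then c l else 0)"
proof -
  have "inner (\<phi> l) (\<Sum>k\<in>F. c k *\<^sub>R \<phi> k) = (\<Sum>k\<in>F. if l = k then c k else 0)"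
    unfolding inner_sum_right using assms orthonormal_basis_inner[OF assms(1)]
    by (intro sum.cong) auto
  then show ?thesis using assms(2) by simp
qed

lemma bessel_inequality:
  assumes "orthonormal_basis \<Lambda> \<phi>" "finite F" "F \<subseteq> \<Lambda>"
  shows "(\<Sum>l\<in>F. (inner (\<phi> l) h)\<^sup>2) \<le> (norm h)\<^sup>2"
proof -
  define g where "g = (\<Sum>k\<in>F. inner (\<phi> k) h *\<^sub>R \<phi> k)"
  have "inner g g = (\<Sum>l\<in>F. (inner (\<phi> l) h)\<^sup>2)"
    using assms inner_basis_sum[OF assms] unfolding g_def
    by (subst (1) inner_sum_left) (auto intro!: sum.cong simp: power2_eq_square)
  moreover have "inner h g = (\<Sum>l\<in>F. (inner (\<phi> l) h)\<^sup>2)"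
    unfolding g_def by (simp add: inner_sum_right inner_commute power2_eq_square)
  moreover have "0 \<le> inner (h - g) (h - g)" by simp
  ultimately show ?thesis by (simp add: inner_diff inner_commute power2_norm_eq_inner)
qed

lemma finite_large_basis_coeffs:
  assumes "orthonormal_basis \<Lambda> \<phi>" and "b > 0"
  shows "finite {l\<in>\<Lambda>. b \<le> \<bar>inner (\<phi> l) h\<bar>}"
proof (rule ccontr)
  assume "infinite {l\<in>\<Lambda>. b \<le> \<bar>inner (\<phi> l) h\<bar>}"
  obtain n :: nat where n: "(norm h)\<^sup>2 / b\<^sup>2 < n" using reals_Archimedean2 by blast
  obtain F where F: "F \<subseteq> {l\<in>\<Lambda>. b \<le> \<bar>inner (\<phi> l) h\<bar>}" "finite F" "card F = n"
    using infinite_arbitrarily_large[OF \<open>infinite _\<close>] by blast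
  have "n * b\<^sup>2 = (\<Sum>l\<in>F. b\<^sup>2)" using F by simp
  also have "\<dots> \<le> (\<Sum>l\<in>F. (inner (\<phi> l) h)\<^sup>2)"
    using F \<open>b > 0\<close> by (intro sum_mono) (auto simp: abs_le_square_iff[symmetric])
  also have "\<dots> \<le> (norm h)\<^sup>2" using F by (intro bessel_inequality[OF assms(1)]) auto
  finally show False using n \<open>b > 0\<close> by (simp add: divide_less_eq)
qed

lemma span_basis_eq_sum:
  assumes "orthonormal_basis \<Lambda> \<phi>" "finite F" "F \<subseteq> \<Lambda>" and "h \<in> span (\<phi> ` F)"
  shows "h = (\<Sum>k\<in>F. inner (\<phi> k) h *\<^sub>R \<phi> k)"
proof (rule orthonormal_basis_eqI[OF assms(1)])
  fix l assume "l \<in> \<Lambda>"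
  from assms(4) show "inner (\<phi> l) h = inner (\<phi> l) (\<Sum>k\<in>F. inner (\<phi> k) h *\<^sub>R \<phi> k)"
  proof (induction rule: span_induct_alt)
    case (step c x y)
    then obtain j where "j \<in> F" "x = \<phi> j" by auto
    then have "inner (\<phi> k) x = (if k = j then 1 else 0)" if "k \<in> \<Lambda>" for k
      using that assms(3) orthonormal_basis_inner[OF assms(1), of k j] by auto
    then show ?case using step.IH assms(2,3) \<open>l \<in> \<Lambda>\<close> \<open>j \<in> F\<close>
      by (cases "l = j") (auto simp: inner_add_right inner_basis_sum[OF assms(1-3)])
  qed (simp add: inner_basis_sum[OF assms(1-3) \<open>l \<in> \<Lambda>\<close>])
qed

lemma coeff_series_bounded_linear:
  assumes onb: "orthonormal_basis \<Lambda> \<phi>" and summable: "(\<lambda>l. \<bar>c l\<bar>) summable_on \<Lambda>"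
  shows "(\<lambda>l. c l * inner (\<phi> l) z) summable_on \<Lambda>"
    and "bounded_linear (\<lambda>z. \<Sum>\<^sub>\<infinity>l\<in>\<Lambda>. c l * inner (\<phi> l) z)"
proof -
  have bound: "norm (c l * inner (\<phi> l) z) \<le> \<bar>c l\<bar> * norm z" if "l \<in> \<Lambda>" for l z
    using Cauchy_Schwarz_ineq2[of "\<phi> l" z] orthonormal_basis_norm[OF onb that]
    by (simp add: abs_mult mult_left_mono)
  have summable_bound: "(\<lambda>l. \<bar>c l\<bar> * norm z) summable_on \<Lambda>" for z
    using summable by (rule summable_on_cmult_left)
  have summable_z: "(\<lambda>l. c l * inner (\<phi> l) z) summable_on \<Lambda>" for z
    using summable_on_comparison_test[OF summable_bound bound]
    by (simp add: summable_on_iff_abs_summable_on_real[of "\<lambda>l. c l * inner (\<phi> l) z"])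
  then show "(\<lambda>l. c l * inner (\<phi> l) z) summable_on \<Lambda>" .
  show "bounded_linear (\<lambda>z. \<Sum>\<^sub>\<infinity>l\<in>\<Lambda>. c l * inner (\<phi> l) z)"
  proof (rule bounded_linear_intro[where K = "\<Sum>\<^sub>\<infinity>l\<in>\<Lambda>. \<bar>c l\<bar>"])
    show "(\<Sum>\<^sub>\<infinity>l\<in>\<Lambda>. c l * inner (\<phi> l) (x + y))
        = (\<Sum>\<^sub>\<infinity>l\<in>\<Lambda>. c l * inner (\<phi> l) x) + (\<Sum>\<^sub>\<infinity>l\<in>\<Lambda>. c l * inner (\<phi> l) y)" for x y
      by (simp add: inner_add_right distrib_left infsum_add[OF summable_z summable_z])
    show "(\<Sum>\<^sub>\<infinity>l\<in>\<Lambda>. c l * inner (\<phi> l) (r *\<^sub>R x)) = r *\<^sub>R (\<Sum>\<^sub>\<infinity>l\<in>\<Lambda>. c l * inner (\<phi> l) x)" for r x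
      by (simp add: mult.left_commute infsum_cmult_right')
    show "norm (\<Sum>\<^sub>\<infinity>l\<in>\<Lambda>. c l * inner (\<phi> l) x) \<le> norm x * (\<Sum>\<^sub>\<infinity>l\<in>\<Lambda>. \<bar>c l\<bar>)" for x
    proof -
      have "norm (\<Sum>\<^sub>\<infinity>l\<in>\<Lambda>. c l * inner (\<phi> l) x) \<le> (\<Sum>\<^sub>\<infinity>l\<in>\<Lambda>. \<bar>c l\<bar> * norm x)"
        using bound by (intro norm_infsum_le[OF has_sum_infsum[OF summable_z] has_sum_infsum[OF summable_bound]])
      then show ?thesis by (simp add: infsum_cmult_left' infsum_cmult_right' mult.commute)
    qed
  qed
qed

text \<open>A type of sort {real_inner, complete_space} is not of class banach, so the expansion of h
  is obtained weakly: the coefficient functional is represented by Riesz, and the representing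
  vector is identified with h.\<close>

lemma orthonormal_basis_has_sum_inner:
  fixes h :: "'a::{real_inner,complete_space}"
  assumes onb: "orthonormal_basis \<Lambda> \<phi>" and summable: "(\<lambda>l. \<bar>inner (\<phi> l) h\<bar>) summable_on \<Lambda>"
  shows "((\<lambda>l. inner (\<phi> l) h * inner (\<phi> l) z) has_sum inner h z) \<Lambda>"
proof -
  note coeff_series = coeff_series_bounded_linear[OF onb summable]
  obtain w where w: "\<And>z. (\<Sum>\<^sub>\<infinity>l\<in>\<Lambda>. inner (\<phi> l) h * inner (\<phi> l) z) = inner w z"
    using riesz_representation[OF coeff_series(2)] by blast
  have "w = h"
  proof (rule orthonormal_basis_eqI[OF onb])
    fix j assume "j \<in> \<Lambda>"
    have "(\<Sum>\<^sub>\<infinity>l\<in>\<Lambda>. inner (\<phi> l) h * inner (\<phi> l) (\<phi> j))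
        = (\<Sum>\<^sub>\<infinity>l\<in>{j}. inner (\<phi> l) h * inner (\<phi> l) (\<phi> j))"
      by (rule infsum_cong_neutral) (use \<open>j \<in> \<Lambda>\<close> orthonormal_basis_inner[OF onb _ \<open>j \<in> \<Lambda>\<close>] in auto)
    also have "\<dots> = inner (\<phi> j) h" using orthonormal_basis_inner[OF onb \<open>j \<in> \<Lambda>\<close> \<open>j \<in> \<Lambda>\<close>] by simp
    finally show "inner (\<phi> j) w = inner (\<phi> j) h" using w[of "\<phi> j"] by (simp add: inner_commute)
  qed
  then show ?thesis using has_sum_infsum[OF coeff_series(1), of z] w[of z] by simp
qed

lemma norm_le_infsum_basis_coeffs:
  fixes h :: "'a::{real_inner,complete_space}"
  assumes onb: "orthonormal_basis \<Lambda> \<phi>" and summable: "(\<lambda>l. \<bar>inner (\<phi> l) h\<bar>) summable_on \<Lambda>"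
  shows "norm h \<le> (\<Sum>\<^sub>\<infinity>l\<in>\<Lambda>. \<bar>inner (\<phi> l) h\<bar>)"
proof (cases "h = 0")
  case False
  note expansion = orthonormal_basis_has_sum_inner[OF onb summable, of h]
  have "norm h * norm h = inner h h" by (simp add: dot_square_norm power2_eq_square)
  also have "\<dots> = (\<Sum>\<^sub>\<infinity>l\<in>\<Lambda>. inner (\<phi> l) h * inner (\<phi> l) h)"
    using infsumI[OF expansion] by (rule sym)
  also have "\<dots> \<le> (\<Sum>\<^sub>\<infinity>l\<in>\<Lambda>. \<bar>inner (\<phi> l) h\<bar> * norm h)"
  proof (rule infsum_mono)
    show "(\<lambda>l. inner (\<phi> l) h * inner (\<phi> l) h) summable_on \<Lambda>"
      using expansion by (rule has_sum_imp_summable)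
    show "(\<lambda>l. \<bar>inner (\<phi> l) h\<bar> * norm h) summable_on \<Lambda>"
      using summable by (rule summable_on_cmult_left)
    fix l assume "l \<in> \<Lambda>"
    then have "\<bar>inner (\<phi> l) h\<bar> \<le> norm h"
      using Cauchy_Schwarz_ineq2[of "\<phi> l" h] orthonormal_basis_norm[OF onb \<open>l \<in> \<Lambda>\<close>] by simp
    then have "\<bar>inner (\<phi> l) h\<bar> * \<bar>inner (\<phi> l) h\<bar> \<le> \<bar>inner (\<phi> l) h\<bar> * norm h"
      by (rule mult_left_mono) simp
    then show "inner (\<phi> l) h * inner (\<phi> l) h \<le> \<bar>inner (\<phi> l) h\<bar> * norm h"
      by (simp only: abs_mult_self_eq)
  qed
  also have "\<dots> = (\<Sum>\<^sub>\<infinity>l\<in>\<Lambda>. \<bar>inner (\<phi> l) h\<bar>) * norm h" by (rule infsum_cmult_left')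
  finally show ?thesis by (rule mult_right_le_imp_le) (simp add: False)
qed (auto intro: infsum_nonneg)

lemma norm_diff_basis_sum_le:
  fixes h :: "'a::{real_inner,complete_space}"
  assumes onb: "orthonormal_basis \<Lambda> \<phi>" and "finite \<Omega>" "\<Omega> \<subseteq> \<Lambda>"
    and summable: "(\<lambda>l. \<bar>inner (\<phi> l) h\<bar>) summable_on \<Lambda>"
  shows "norm (h - (\<Sum>k\<in>\<Omega>. inner (\<phi> k) h *\<^sub>R \<phi> k)) \<le> (\<Sum>\<^sub>\<infinity>l\<in>\<Lambda>-\<Omega>. \<bar>inner (\<phi> l) h\<bar>)"
proof -
  define r where "r = h - (\<Sum>k\<in>\<Omega>. inner (\<phi> k) h *\<^sub>R \<phi> k)"
  have coeff: "inner (\<phi> l) r = (if l \<in> \<Omega> then 0 else inner (\<phi> l) h)" if "l \<in> \<Lambda>" for l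
    unfolding r_def inner_diff_right inner_basis_sum[OF onb assms(2,3) that] by simp
  have "(\<lambda>l. \<bar>inner (\<phi> l) r\<bar>) summable_on \<Lambda>"
    using summable by (rule summable_on_comparison_test) (simp_all add: coeff)
  then have "norm r \<le> (\<Sum>\<^sub>\<infinity>l\<in>\<Lambda>. \<bar>inner (\<phi> l) r\<bar>)" by (rule norm_le_infsum_basis_coeffs[OF onb])
  also have "\<dots> = (\<Sum>\<^sub>\<infinity>l\<in>\<Lambda>-\<Omega>. \<bar>inner (\<phi> l) h\<bar>)"
    by (rule infsum_cong_neutral) (auto simp: coeff)
  finally show ?thesis by (simp add: r_def)
qed

section \<open>The weighted l1 norm\<close>

lemma ennreal_infsum:
  fixes f :: "'a \<Rightarrow> real"
  assumes "f summable_on A" and "\<And>x. x \<in> A \<Longrightarrow> f x \<ge> 0"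
  shows "(\<Sum>\<^sub>\<infinity>x\<in>A. ennreal (f x)) = ennreal (\<Sum>\<^sub>\<infinity>x\<in>A. f x)"
proof -
  have "(\<Sum>\<^sub>\<infinity>x\<in>A. ennreal (f x)) = (SUP F\<in>{F. finite F \<and> F \<subseteq> A}. (\<Sum>x\<in>F. ennreal (f x)))"
    by (rule nonneg_infsum_complete) simp
  also have "\<dots> = (SUP F\<in>{F. finite F \<and> F \<subseteq> A}. ennreal (sum f F))"
    using assms(2) by (intro SUP_cong refl) (auto intro!: sum_ennreal)
  also have "\<dots> = ennreal (\<Sum>\<^sub>\<infinity>x\<in>A. f x)"
    using infsum_nonneg_is_SUPREMUM_ennreal[OF assms] by simp
  finally show ?thesis .
qed

lemma ennreal_infsum_cmult_right:
  fixes f :: "'a \<Rightarrow> ennreal"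
  shows "(\<Sum>\<^sub>\<infinity>x\<in>A. c * f x) = c * (\<Sum>\<^sub>\<infinity>x\<in>A. f x)"
proof -
  have "(\<Sum>\<^sub>\<infinity>x\<in>A. c * f x) = (SUP F\<in>{F. finite F \<and> F \<subseteq> A}. c * (\<Sum>x\<in>F. f x))"
    unfolding nonneg_infsum_complete[OF zero_le] by (simp add: sum_distrib_left)
  also have "\<dots> = c * (\<Sum>\<^sub>\<infinity>x\<in>A. f x)"
    unfolding nonneg_infsum_complete[OF zero_le] by (rule SUP_mult_left_ennreal[symmetric])
  finally show ?thesis .
qed

lemma summable_on_if_ennreal_infsum_finite:
  fixes f :: "'a \<Rightarrow> real"
  assumes nonneg: "\<And>x. x \<in> A \<Longrightarrow> f x \<ge> 0" and finite: "(\<Sum>\<^sub>\<infinity>x\<in>A. ennreal (f x)) < \<infinity>"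
  shows "f summable_on A"
proof (rule nonneg_bdd_above_summable_on[OF nonneg])
  show "bdd_above (sum f ` {F. F \<subseteq> A \<and> finite F})"
  proof (rule bdd_aboveI)
    fix y assume "y \<in> sum f ` {F. F \<subseteq> A \<and> finite F}"
    then obtain F where F: "F \<subseteq> A" "finite F" and y: "y = sum f F" by auto
    have "ennreal (sum f F) = (\<Sum>x\<in>F. ennreal (f x))"
      using F nonneg by (intro sum_ennreal[symmetric]) auto
    also have "\<dots> \<le> (\<Sum>\<^sub>\<infinity>x\<in>A. ennreal (f x))"
      unfolding nonneg_infsum_complete[OF zero_le] using F by (intro SUP_upper) auto
    finally have "enn2real (ennreal (sum f F)) \<le> enn2real (\<Sum>\<^sub>\<infinity>x\<in>A. ennreal (f x))"
      using finite by (intro enn2real_mono) auto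
    moreover have "sum f F \<ge> 0" using F nonneg by (intro sum_nonneg) auto
    ultimately show "y \<le> enn2real (\<Sum>\<^sub>\<infinity>x\<in>A. ennreal (f x))" by (simp add: y)
  qed
qed

lemma wl1_finite_iff:
  assumes "\<And>l. l \<in> \<Lambda> \<Longrightarrow> \<kappa> l \<ge> 0"
  shows "wl1 \<Lambda> \<phi> \<kappa> h < \<infinity> \<longleftrightarrow> (\<lambda>l. \<kappa> l * \<bar>inner (\<phi> l) h\<bar>) summable_on \<Lambda>"
  using assms summable_on_if_ennreal_infsum_finite[of \<Lambda> "\<lambda>l. \<kappa> l * \<bar>inner (\<phi> l) h\<bar>"]
    ennreal_infsum[of "\<lambda>l. \<kappa> l * \<bar>inner (\<phi> l) h\<bar>" \<Lambda>]
  unfolding wl1_def by auto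

lemma wl1_eq_infsum:
  assumes "\<And>l. l \<in> \<Lambda> \<Longrightarrow> \<kappa> l \<ge> 0" and "wl1 \<Lambda> \<phi> \<kappa> h < \<infinity>"
  shows "enn2real (wl1 \<Lambda> \<phi> \<kappa> h) = (\<Sum>\<^sub>\<infinity>l\<in>\<Lambda>. \<kappa> l * \<bar>inner (\<phi> l) h\<bar>)"
  using assms ennreal_infsum[of "\<lambda>l. \<kappa> l * \<bar>inner (\<phi> l) h\<bar>" \<Lambda>] wl1_finite_iff[of \<Lambda> \<kappa> \<phi> h]
  unfolding wl1_def by (simp add: infsum_nonneg)

lemma wl1_scaleR: "wl1 \<Lambda> \<phi> \<kappa> (t *\<^sub>R h) = ennreal \<bar>t\<bar> * wl1 \<Lambda> \<phi> \<kappa> h"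
proof -
  have "ennreal (\<kappa> l * \<bar>inner (\<phi> l) (t *\<^sub>R h)\<bar>) = ennreal \<bar>t\<bar> * ennreal (\<kappa> l * \<bar>inner (\<phi> l) h\<bar>)" for l
    by (simp add: abs_mult mult.left_commute ennreal_mult')
  then show ?thesis unfolding wl1_def by (simp add: ennreal_infsum_cmult_right)
qed

lemma wl1_basis_vector:
  assumes "orthonormal_basis \<Lambda> \<phi>" and "l \<in> \<Lambda>"
  shows "wl1 \<Lambda> \<phi> \<kappa> (\<phi> l) = ennreal (\<kappa> l)"
proof -
  have "wl1 \<Lambda> \<phi> \<kappa> (\<phi> l) = (\<Sum>\<^sub>\<infinity>j\<in>{l}. ennreal (\<kappa> j * \<bar>inner (\<phi> j) (\<phi> l)\<bar>))"
    unfolding wl1_def using assms orthonormal_basis_inner[OF assms(1) _ assms(2)]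
    by (intro infsum_cong_neutral) auto
  then show ?thesis using orthonormal_basis_inner[OF assms(1) assms(2) assms(2)] by simp
qed

lemma wl1_coeff_abs_summable:
  assumes "a > 0" "\<And>l. l \<in> \<Lambda> \<Longrightarrow> \<kappa> l \<ge> a" and "wl1 \<Lambda> \<phi> \<kappa> h < \<infinity>"
  shows "(\<lambda>l. \<bar>inner (\<phi> l) h\<bar>) summable_on \<Lambda>"
proof (rule summable_on_comparison_test)
  have "(\<lambda>l. \<kappa> l * \<bar>inner (\<phi> l) h\<bar>) summable_on \<Lambda>"
    using assms wl1_finite_iff[of \<Lambda> \<kappa> \<phi> h] by force
  then show "(\<lambda>l. \<kappa> l * \<bar>inner (\<phi> l) h\<bar> * (1 / a)) summable_on \<Lambda>"
    by (rule summable_on_cmult_left)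
  show "\<bar>inner (\<phi> l) h\<bar> \<le> \<kappa> l * \<bar>inner (\<phi> l) h\<bar> * (1 / a)" if "l \<in> \<Lambda>" for l
  proof -
    have "a * \<bar>inner (\<phi> l) h\<bar> \<le> \<kappa> l * \<bar>inner (\<phi> l) h\<bar>"
      by (rule mult_right_mono[OF assms(2)[OF that] abs_ge_zero])
    then show ?thesis using assms(1) by (simp add: field_simps mult.commute)
  qed
qed simp

lemma wl1_diff_coeff_abs_summable:
  assumes "a > 0" "\<And>l. l \<in> \<Lambda> \<Longrightarrow> \<kappa> l \<ge> a" and "wl1 \<Lambda> \<phi> \<kappa> h < \<infinity>" "wl1 \<Lambda> \<phi> \<kappa> h' < \<infinity>"
  shows "(\<lambda>l. \<bar>inner (\<phi> l) (h - h')\<bar>) summable_on \<Lambda>"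
proof (rule summable_on_comparison_test)
  show "(\<lambda>l. \<bar>inner (\<phi> l) h\<bar> + \<bar>inner (\<phi> l) h'\<bar>) summable_on \<Lambda>"
    using wl1_coeff_abs_summable[OF assms(1,2)] assms(3,4) by (intro summable_on_add)
  show "\<bar>inner (\<phi> l) (h - h')\<bar> \<le> \<bar>inner (\<phi> l) h\<bar> + \<bar>inner (\<phi> l) h'\<bar>" for l
    by (simp add: inner_diff_right abs_triangle_ineq4)
qed simp

section \<open>Subgradients and Bregman distances\<close>

lemma enn2ereal_eq_enn2real: "x < \<infinity> \<Longrightarrow> enn2ereal x = ereal (enn2real x)"
  by (metis enn2ereal_ennreal enn2real_nonneg ennreal_enn2real infinity_ennreal_def)

lemma subdiff_finite:
  fixes F :: "'a::real_inner \<Rightarrow> ennreal"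
  assumes "\<xi> \<in> subdiff (\<lambda>z. enn2ereal (F z)) z0" and "F z < \<infinity>"
  shows "F z0 < \<infinity>"
proof (rule ccontr)
  assume "\<not> F z0 < \<infinity>"
  then have "F z0 = top" by (metis infinity_ennreal_def top.not_eq_extremum)
  then have "enn2ereal (F z0) = \<infinity>" by simp
  moreover have "enn2ereal (F z0) + ereal (inner \<xi> (z - z0)) \<le> enn2ereal (F z)"
    using assms(1) by (simp add: subdiff_def)
  ultimately show False using enn2ereal_eq_enn2real[OF assms(2)] by simp
qed

lemma subdiff_real_ineq:
  fixes F :: "'a::real_inner \<Rightarrow> ennreal"
  assumes "\<xi> \<in> subdiff (\<lambda>z. enn2ereal (F z)) z0" and "F z0 < \<infinity>" "F z < \<infinity>"
  shows "enn2real (F z0) + inner \<xi> (z - z0) \<le> enn2real (F z)"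
proof -
  have "enn2ereal (F z0) + ereal (inner \<xi> (z - z0)) \<le> enn2ereal (F z)"
    using assms(1) by (simp add: subdiff_def)
  then show ?thesis unfolding enn2ereal_eq_enn2real[OF assms(2)] enn2ereal_eq_enn2real[OF assms(3)] by simp
qed

lemma bregman_real:
  fixes F :: "'a::real_inner \<Rightarrow> ennreal"
  assumes "F z0 < \<infinity>" "F z < \<infinity>"
  shows "bregman (\<lambda>z. enn2ereal (F z)) \<xi> z z0 = ereal (enn2real (F z) - enn2real (F z0) - inner \<xi> (z - z0))"
  unfolding bregman_def enn2ereal_eq_enn2real[OF assms(1)] enn2ereal_eq_enn2real[OF assms(2)] by simp

lemma subdiff_positively_homogeneous:
  fixes F :: "'a::real_inner \<Rightarrow> ennreal"
  assumes hom: "\<And>t z. t \<ge> 0 \<Longrightarrow> F (t *\<^sub>R z) = ennreal t * F z"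
    and \<xi>: "\<xi> \<in> subdiff (\<lambda>z. enn2ereal (F z)) z0" and finite: "F z0 < \<infinity>"
  shows "enn2real (F z0) = inner \<xi> z0"
    and "\<And>z. F z < \<infinity> \<Longrightarrow> inner \<xi> z \<le> enn2real (F z)"
proof -
  have scaled: "enn2real (F z0) + inner \<xi> (t *\<^sub>R z0 - z0) \<le> t * enn2real (F z0)" if "t \<ge> 0" for t
    using subdiff_real_ineq[OF \<xi> finite, of "t *\<^sub>R z0"] hom[OF that, of z0] finite that
    by (simp add: enn2real_mult ennreal_mult_less_top)
  have "enn2real (F z0) - inner \<xi> z0 \<le> 0" using scaled[of 0] by (simp add: inner_diff_right)
  moreover have "enn2real (F z0) + inner \<xi> z0 \<le> 2 * enn2real (F z0)"
    using scaled[of 2] by (simp add: inner_diff_right inner_scaleR_right)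
  ultimately show eq: "enn2real (F z0) = inner \<xi> z0" by linarith
  show "inner \<xi> z \<le> enn2real (F z)" if "F z < \<infinity>" for z
    using subdiff_real_ineq[OF \<xi> finite that] eq by (simp add: inner_diff_right)
qed

section \<open>Subgradients of the weighted l1 norm\<close>

lemma wl1_subdiff_finite:
  assumes "\<eta> \<in> subdiff (\<lambda>h. enn2ereal (wl1 \<Lambda> \<phi> \<kappa> h)) hs"
  shows "wl1 \<Lambda> \<phi> \<kappa> hs < \<infinity>"
  using subdiff_finite[OF assms, of 0] wl1_scaleR[of \<Lambda> \<phi> \<kappa> 0] by simp

lemma wl1_subdiff_eq_inner:
  assumes "\<eta> \<in> subdiff (\<lambda>h. enn2ereal (wl1 \<Lambda> \<phi> \<kappa> h)) hs"
  shows "enn2real (wl1 \<Lambda> \<phi> \<kappa> hs) = inner \<eta> hs"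
  by (rule subdiff_positively_homogeneous(1)[OF _ assms wl1_subdiff_finite[OF assms]])
     (simp add: wl1_scaleR)

lemma wl1_subdiff_coeff_le:
  assumes onb: "orthonormal_basis \<Lambda> \<phi>" and \<kappa>: "\<And>l. l \<in> \<Lambda> \<Longrightarrow> \<kappa> l \<ge> 0"
    and \<eta>: "\<eta> \<in> subdiff (\<lambda>h. enn2ereal (wl1 \<Lambda> \<phi> \<kappa> h)) hs" and "l \<in> \<Lambda>"
  shows "\<bar>inner (\<phi> l) \<eta>\<bar> \<le> \<kappa> l"
proof -
  note bound = subdiff_positively_homogeneous(2)[OF _ \<eta> wl1_subdiff_finite[OF \<eta>]]
  have "inner \<eta> (s *\<^sub>R \<phi> l) \<le> \<kappa> l" if "\<bar>s\<bar> = 1" for s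
    using bound[of "s *\<^sub>R \<phi> l"] wl1_scaleR[of \<Lambda> \<phi> \<kappa> s "\<phi> l"] wl1_basis_vector[OF onb \<open>l \<in> \<Lambda>\<close>]
      \<kappa>[OF \<open>l \<in> \<Lambda>\<close>] that
    by (simp add: wl1_scaleR)
  from this[of 1] this[of "-1"] show ?thesis by (simp add: inner_commute)
qed

lemma wl1_bregman_le_real:
  assumes \<eta>: "\<eta> \<in> subdiff (\<lambda>h. enn2ereal (wl1 \<Lambda> \<phi> \<kappa> h)) hs"
    and bregman_le: "bregman (\<lambda>h. enn2ereal (wl1 \<Lambda> \<phi> \<kappa> h)) \<eta> h hs \<le> ereal B"
  shows "wl1 \<Lambda> \<phi> \<kappa> h < \<infinity>" and "enn2real (wl1 \<Lambda> \<phi> \<kappa> h) - inner \<eta> h \<le> B"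
proof -
  note finite_hs = wl1_subdiff_finite[OF \<eta>]
  show finite: "wl1 \<Lambda> \<phi> \<kappa> h < \<infinity>"
  proof (rule ccontr)
    assume "\<not> wl1 \<Lambda> \<phi> \<kappa> h < \<infinity>"
    then have "wl1 \<Lambda> \<phi> \<kappa> h = top" by (metis infinity_ennreal_def top.not_eq_extremum)
    then show False using bregman_le by (simp add: bregman_def enn2ereal_eq_enn2real[OF finite_hs])
  qed
  show "enn2real (wl1 \<Lambda> \<phi> \<kappa> h) - inner \<eta> h \<le> B"
    using bregman_le wl1_subdiff_eq_inner[OF \<eta>]
    by (simp add: bregman_real[OF finite_hs finite] inner_diff_right)
qed

lemma Omega_finite:
  assumes "orthonormal_basis \<Lambda> \<phi>" "a > 0" "\<And>l. l \<in> \<Lambda> \<Longrightarrow> \<kappa> l \<ge> a"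
  shows "finite (Omega \<Lambda> \<phi> \<kappa> \<eta>)"
  by (rule finite_subset[OF _ finite_large_basis_coeffs[OF assms(1,2), of \<eta>]])
     (use assms(3) in \<open>auto simp: Omega_def\<close>)

lemma mgap_pos:
  assumes onb: "orthonormal_basis \<Lambda> \<phi>" and "a > 0" "\<And>l. l \<in> \<Lambda> \<Longrightarrow> \<kappa> l \<ge> a"
    and le: "\<And>l. l \<in> \<Lambda> \<Longrightarrow> \<bar>inner (\<phi> l) \<eta>\<bar> \<le> \<kappa> l"
    and "\<Lambda> - Omega \<Lambda> \<phi> \<kappa> \<eta> \<noteq> {}"
  shows "mgap \<Lambda> \<phi> \<kappa> \<eta> > 0"
proof -
  define gap where "gap l = \<kappa> l - \<bar>inner (\<phi> l) \<eta>\<bar>" for l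
  \<comment> \<open>outside the finite set G the gap is at least a/2, since there \<kappa> l \<ge> a\<close>
  define G where "G = {l \<in> \<Lambda> - Omega \<Lambda> \<phi> \<kappa> \<eta>. a/2 \<le> \<bar>inner (\<phi> l) \<eta>\<bar>}"
  have "finite G"
    by (rule finite_subset[OF _ finite_large_basis_coeffs[OF onb, of "a/2" \<eta>]])
       (use \<open>a > 0\<close> in \<open>auto simp: G_def\<close>)
  have gap_pos: "gap l > 0" if "l \<in> \<Lambda> - Omega \<Lambda> \<phi> \<kappa> \<eta>" for l
    using that le by (force simp: Omega_def gap_def)
  define b where "b = Min (insert (a/2) (gap ` G))"
  have "b > 0"
    unfolding b_def using \<open>finite G\<close> \<open>a > 0\<close> gap_pos by (auto simp: G_def)
  moreover have "b \<le> gap l" if l: "l \<in> \<Lambda> - Omega \<Lambda> \<phi> \<kappa> \<eta>" for l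
  proof (cases "l \<in> G")
    case True
    then show ?thesis using \<open>finite G\<close> by (simp add: b_def)
  next
    case False
    have "b \<le> a/2" unfolding b_def using \<open>finite G\<close> by (intro Min_le) auto
    moreover have "\<bar>inner (\<phi> l) \<eta>\<bar> < a/2" using False l by (auto simp: G_def)
    moreover have "a \<le> \<kappa> l" using assms(3) l by blast
    ultimately show ?thesis by (simp add: gap_def)
  qed
  then have "b \<le> mgap \<Lambda> \<phi> \<kappa> \<eta>"
    unfolding mgap_def gap_def[symmetric] using assms(5) by (intro cInf_greatest) auto
  ultimately show ?thesis by simp
qed

lemma mgap_le:
  assumes "\<And>l. l \<in> \<Lambda> \<Longrightarrow> \<bar>inner (\<phi> l) \<eta>\<bar> \<le> \<kappa> l" and "l \<in> \<Lambda> - Omega \<Lambda> \<phi> \<kappa> \<eta>"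
  shows "mgap \<Lambda> \<phi> \<kappa> \<eta> \<le> \<kappa> l - \<bar>inner (\<phi> l) \<eta>\<bar>"
  unfolding mgap_def using assms by (intro cInf_lower bdd_belowI[of _ 0]) auto

lemma wl1_minus_inner_has_sum:
  fixes z :: "'a::{real_inner,complete_space}"
  assumes onb: "orthonormal_basis \<Lambda> \<phi>" and "a > 0" "\<And>l. l \<in> \<Lambda> \<Longrightarrow> \<kappa> l \<ge> a"
    and finite: "wl1 \<Lambda> \<phi> \<kappa> z < \<infinity>"
  shows "((\<lambda>l. \<kappa> l * \<bar>inner (\<phi> l) z\<bar> - inner (\<phi> l) z * inner (\<phi> l) \<eta>)
           has_sum (enn2real (wl1 \<Lambda> \<phi> \<kappa> z) - inner z \<eta>)) \<Lambda>"
proof -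
  have \<kappa>: "\<And>l. l \<in> \<Lambda> \<Longrightarrow> \<kappa> l \<ge> 0" using assms(2,3) by force
  have "(\<lambda>l. \<kappa> l * \<bar>inner (\<phi> l) z\<bar>) summable_on \<Lambda>"
    using wl1_finite_iff[of \<Lambda> \<kappa> \<phi> z] \<kappa> finite by blast
  then have "((\<lambda>l. \<kappa> l * \<bar>inner (\<phi> l) z\<bar>) has_sum enn2real (wl1 \<Lambda> \<phi> \<kappa> z)) \<Lambda>"
    using wl1_eq_infsum[of \<Lambda> \<kappa> \<phi> z, OF \<kappa> finite] by (simp add: has_sum_infsum)
  moreover have "((\<lambda>l. - (inner (\<phi> l) z * inner (\<phi> l) \<eta>)) has_sum - inner z \<eta>) \<Lambda>"
    using orthonormal_basis_has_sum_inner[OF onb wl1_coeff_abs_summable[OF assms(2,3) finite]]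
    by (simp add: has_sum_uminus)
  ultimately show ?thesis using has_sum_add by fastforce
qed

lemma wl1_bregman_ge_tail:
  fixes h hs :: "'a::{real_inner,complete_space}"
  assumes onb: "orthonormal_basis \<Lambda> \<phi>" and "a > 0" and \<kappa>_ge: "\<And>l. l \<in> \<Lambda> \<Longrightarrow> \<kappa> l \<ge> a"
    and \<eta>: "\<eta> \<in> subdiff (\<lambda>h. enn2ereal (wl1 \<Lambda> \<phi> \<kappa> h)) hs"
    and finite: "wl1 \<Lambda> \<phi> \<kappa> h < \<infinity>"
  shows "mgap \<Lambda> \<phi> \<kappa> \<eta> * (\<Sum>\<^sub>\<infinity>l\<in>\<Lambda> - Omega \<Lambda> \<phi> \<kappa> \<eta>. \<bar>inner (\<phi> l) (h - hs)\<bar>)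
           \<le> enn2real (wl1 \<Lambda> \<phi> \<kappa> h) - inner \<eta> h"
proof -
  let ?\<Omega> = "Omega \<Lambda> \<phi> \<kappa> \<eta>" and ?m = "mgap \<Lambda> \<phi> \<kappa> \<eta>"
  have \<kappa>: "\<And>l. l \<in> \<Lambda> \<Longrightarrow> \<kappa> l \<ge> 0" using \<open>a > 0\<close> \<kappa>_ge by force
  note finite_hs = wl1_subdiff_finite[OF \<eta>]
  note hs_eq = wl1_subdiff_eq_inner[OF \<eta>]
  have coeff_le: "\<And>l. l \<in> \<Lambda> \<Longrightarrow> \<bar>inner (\<phi> l) \<eta>\<bar> \<le> \<kappa> l"
    using wl1_subdiff_coeff_le[OF onb \<kappa> \<eta>] .
  define gap where "gap z l = \<kappa> l * \<bar>inner (\<phi> l) z\<bar> - inner (\<phi> l) z * inner (\<phi> l) \<eta>" for z l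
  define G where "G l = gap h l + gap hs l" for l
  \<comment> \<open>the terms of hs sum to zero, since hs attains equality in its subgradient inequality\<close>
  have "(G has_sum (enn2real (wl1 \<Lambda> \<phi> \<kappa> h) - inner \<eta> h)) \<Lambda>"
    using has_sum_add[OF wl1_minus_inner_has_sum[OF onb \<open>a > 0\<close> \<kappa>_ge finite, of \<eta>]
        wl1_minus_inner_has_sum[OF onb \<open>a > 0\<close> \<kappa>_ge finite_hs, of \<eta>]]
      hs_eq
    by (simp add: G_def[abs_def] gap_def inner_commute)
  have gap_ge: "(\<kappa> l - \<bar>inner (\<phi> l) \<eta>\<bar>) * \<bar>inner (\<phi> l) z\<bar> \<le> gap z l" for z l
    using abs_ge_self[of "inner (\<phi> l) z * inner (\<phi> l) \<eta>"] by (simp add: gap_def abs_mult algebra_simps)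
  have G_nonneg: "0 \<le> G l" if "l \<in> \<Lambda>" for l
    using gap_ge[of l h] gap_ge[of l hs] coeff_le[OF that] unfolding G_def
    by (smt (verit) abs_ge_zero mult_nonneg_nonneg)
  have term_le: "?m * \<bar>inner (\<phi> l) (h - hs)\<bar> \<le> G l" if l: "l \<in> \<Lambda> - ?\<Omega>" for l
  proof -
    have "?m * \<bar>inner (\<phi> l) (h - hs)\<bar> \<le> (\<kappa> l - \<bar>inner (\<phi> l) \<eta>\<bar>) * \<bar>inner (\<phi> l) (h - hs)\<bar>"
      by (rule mult_right_mono[OF mgap_le[OF coeff_le l] abs_ge_zero])
    also have "\<dots> \<le> (\<kappa> l - \<bar>inner (\<phi> l) \<eta>\<bar>) * (\<bar>inner (\<phi> l) h\<bar> + \<bar>inner (\<phi> l) hs\<bar>)"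
      using coeff_le l by (intro mult_left_mono) (auto simp: inner_diff_right abs_triangle_ineq4)
    also have "\<dots> \<le> G l" using gap_ge[of l h] gap_ge[of l hs] by (simp add: G_def distrib_left)
    finally show ?thesis .
  qed
  have "(\<lambda>l. \<bar>inner (\<phi> l) (h - hs)\<bar>) summable_on \<Lambda> - ?\<Omega>"
    using wl1_diff_coeff_abs_summable[OF \<open>a > 0\<close> \<kappa>_ge finite finite_hs] by (rule summable_on_subset) auto
  have "?m * (\<Sum>\<^sub>\<infinity>l\<in>\<Lambda> - ?\<Omega>. \<bar>inner (\<phi> l) (h - hs)\<bar>) = (\<Sum>\<^sub>\<infinity>l\<in>\<Lambda> - ?\<Omega>. ?m * \<bar>inner (\<phi> l) (h - hs)\<bar>)"
    by (rule infsum_cmult_right'[symmetric])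
  also have "\<dots> \<le> (\<Sum>\<^sub>\<infinity>l\<in>\<Lambda>. G l)"
  proof (rule infsum_mono_neutral)
    show "(\<lambda>l. ?m * \<bar>inner (\<phi> l) (h - hs)\<bar>) summable_on \<Lambda> - ?\<Omega>"
      using \<open>_ summable_on \<Lambda> - ?\<Omega>\<close> by (rule summable_on_cmult_right)
    show "G summable_on \<Lambda>" using \<open>(G has_sum _) \<Lambda>\<close> by (rule has_sum_imp_summable)
  qed (use term_le G_nonneg in auto)
  also have "\<dots> = enn2real (wl1 \<Lambda> \<phi> \<kappa> h) - inner \<eta> h" using \<open>(G has_sum _) \<Lambda>\<close> by (rule infsumI)
  finally show ?thesis .
qed

section \<open>Injectivity on finite spans\<close>

lemma finite_family_convergent_subseq:
  fixes c :: "nat \<Rightarrow> 'l \<Rightarrow> real"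
  assumes "finite F" and "\<And>n l. l \<in> F \<Longrightarrow> \<bar>c n l\<bar> \<le> B"
  obtains r where "strict_mono r" "\<And>l. l \<in> F \<Longrightarrow> convergent (\<lambda>n. c (r n) l)"
  using assms
proof (induction F arbitrary: thesis rule: finite_induct)
  case empty
  then show ?case using strict_mono_id by blast
next
  case (insert k F)
  then obtain r where r: "strict_mono r" "\<And>l. l \<in> F \<Longrightarrow> convergent (\<lambda>n. c (r n) l)" by blast
  obtain s where s: "strict_mono s" "monoseq (\<lambda>n. c (r (s n)) k)"
    using seq_monosub[of "\<lambda>n. c (r n) k"] by blast
  have "Bseq (\<lambda>n. c (r (s n)) k)" using insert.prems(2) by (intro BseqI'[of _ B]) auto
  then have "convergent (\<lambda>n. c (r (s n)) k)" using s(2) by (rule Bseq_monoseq_convergent)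
  moreover have "convergent (\<lambda>n. c (r (s n)) l)" if "l \<in> F" for l
    using LIMSEQ_subseq_LIMSEQ[OF _ s(1)] r(2)[OF that] by (auto simp: convergent_def o_def)
  moreover have "strict_mono (\<lambda>n. r (s n))" using strict_mono_o[OF r(1) s(1)] by (simp add: o_def)
  ultimately show ?case using insert.prems(1)[of "\<lambda>n. r (s n)"] by blast
qed

lemma span_basis_seq_convergent_subseq:
  fixes g :: "nat \<Rightarrow> 'a::real_inner"
  assumes onb: "orthonormal_basis \<Lambda> \<phi>" and F: "finite F" "F \<subseteq> \<Lambda>"
    and g_span: "\<And>n. g n \<in> span (\<phi> ` F)" and g_bounded: "\<And>n. norm (g n) \<le> B"
  obtains r g0 where "strict_mono r" "g0 \<in> span (\<phi> ` F)" "(\<lambda>n. g (r n)) \<longlonglongrightarrow> g0"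
proof -
  have "\<bar>inner (\<phi> l) (g n)\<bar> \<le> B" if "l \<in> F" for n l
    using Cauchy_Schwarz_ineq2[of "\<phi> l" "g n"] orthonormal_basis_norm[OF onb] that F g_bounded[of n]
    by (metis mult_1 order.trans subsetD)
  then obtain r where r: "strict_mono r" "\<And>l. l \<in> F \<Longrightarrow> convergent (\<lambda>n. inner (\<phi> l) (g (r n)))"
    using finite_family_convergent_subseq[OF F(1), of "\<lambda>n l. inner (\<phi> l) (g n)"] by blast
  define g0 where "g0 = (\<Sum>k\<in>F. lim (\<lambda>n. inner (\<phi> k) (g (r n))) *\<^sub>R \<phi> k)"
  have "(\<lambda>n. g (r n)) = (\<lambda>n. \<Sum>k\<in>F. inner (\<phi> k) (g (r n)) *\<^sub>R \<phi> k)"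
    using span_basis_eq_sum[OF onb F g_span] by presburger
  also have "\<dots> \<longlonglongrightarrow> g0"
    unfolding g0_def using r(2) by (intro tendsto_sum tendsto_scaleR tendsto_const) (simp add: convergent_LIMSEQ_iff)
  finally have "(\<lambda>n. g (r n)) \<longlonglongrightarrow> g0" .
  moreover have "g0 \<in> span (\<phi> ` F)" unfolding g0_def by (intro span_sum span_scale span_base) auto
  ultimately show thesis using that r(1) by blast
qed

lemma finite_span_bounded_below:
  fixes A :: "'a::real_inner \<Rightarrow> 'b::real_normed_vector"
  assumes onb: "orthonormal_basis \<Lambda> \<phi>" and F: "finite F" "F \<subseteq> \<Lambda>"
    and "bounded_linear A" and inj: "inj_on A (span (\<phi> ` F))"
  obtains K where "\<And>h. h \<in> span (\<phi> ` F) \<Longrightarrow> norm h \<le> K * norm (A h)"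
proof (rule ccontr)
  interpret A: bounded_linear A by fact
  assume "\<not> thesis"
  with that have "\<forall>n::nat. \<exists>h\<in>span (\<phi> ` F). real (Suc n) * norm (A h) < norm h"
    by (metis not_le)
  then obtain h where h_span: "\<And>n. h n \<in> span (\<phi> ` F)"
    and h_less: "\<And>n. real (Suc n) * norm (A (h n)) < norm (h n)"
    by metis
  define g where "g n = h n /\<^sub>R norm (h n)" for n
  have "h n \<noteq> 0" for n using h_less[of n] by auto
  then have g_norm: "norm (g n) = 1" and g_span: "g n \<in> span (\<phi> ` F)" for n
    using h_span by (simp_all add: g_def span_scale)
  have g_small: "norm (A (g n)) < 1 / real (Suc n)" for n
    using h_less[of n] \<open>h n \<noteq> 0\<close> by (simp add: g_def A.scaleR field_simps)
  obtain r g0 where r: "strict_mono r" and "g0 \<in> span (\<phi> ` F)" and lim: "(\<lambda>n. g (r n)) \<longlonglongrightarrow> g0"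
    using span_basis_seq_convergent_subseq[where g=g and B=1, OF onb F g_span] g_norm by auto
  have "norm g0 = 1" using tendsto_norm[OF lim] g_norm by (simp add: LIMSEQ_const_iff)
  have "(\<lambda>n. A (g (r n))) \<longlonglongrightarrow> 0"
  proof (rule tendsto_norm_zero_cancel, rule Lim_null_comparison[OF _ lim_inverse_n'])
    show "\<forall>\<^sub>F n in sequentially. norm (norm (A (g (r n)))) \<le> 1 / real n"
    proof (rule eventually_sequentiallyI[of 1])
      fix n :: nat assume "1 \<le> n"
      have "norm (A (g (r n))) < 1 / real (Suc (r n))" by (rule g_small)
      also have "\<dots> \<le> 1 / real n"
        using seq_suble[OF r, of n] \<open>1 \<le> n\<close> by (intro divide_left_mono) auto
      finally show "norm (norm (A (g (r n)))) \<le> 1 / real n" by simp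
    qed
  qed
  then have "A g0 = 0" using A.tendsto[OF lim] LIMSEQ_unique by blast
  then have "g0 = 0" using inj \<open>g0 \<in> span _\<close> A.zero span_zero unfolding inj_on_def by metis
  then show False using \<open>norm g0 = 1\<close> by simp
qed

text \<open>The bound K only serves to make the supremum defining inv_opnorm one over a bounded set;
  otherwise Sup returns an unspecified real.\<close>

lemma inv_opnorm_bound:
  fixes A :: "'a::real_normed_vector \<Rightarrow> 'b::real_normed_vector"
  assumes S: "subspace S" and "linear A" "inj_on A S"
    and K: "\<And>h. h \<in> S \<Longrightarrow> norm h \<le> K * norm (A h)"
  shows "inv_opnorm A S \<ge> 0" and "\<And>h. h \<in> S \<Longrightarrow> norm h \<le> inv_opnorm A S * norm (A h)"
proof -
  interpret A: linear A by fact
  define N where "N = {norm h | h. h \<in> S \<and> norm (A h) \<le> 1}"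
  have "bdd_above N"
  proof (rule bdd_aboveI)
    fix x assume "x \<in> N"
    then obtain h where "x = norm h" "h \<in> S" "norm (A h) \<le> 1" by (auto simp: N_def)
    moreover have "K * norm (A h) \<le> max K 0"
    proof (cases "K \<ge> 0")
      case True
      then show ?thesis using \<open>norm (A h) \<le> 1\<close> by (simp add: mult_left_le)
    qed (simp add: mult_nonpos_nonneg)
    ultimately show "x \<le> max K 0" using K[of h] by linarith
  qed
  then have upper: "x \<le> inv_opnorm A S" if "x \<in> N" for x
    unfolding inv_opnorm_def N_def[symmetric] using that by (rule cSup_upper[rotated])
  show "inv_opnorm A S \<ge> 0"
    using upper[of 0] subspace_0[OF S] by (auto simp: N_def)
  show "norm h \<le> inv_opnorm A S * norm (A h)" if "h \<in> S" for h
  proof (cases "A h = 0")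
    case True
    then have "h = 0" using \<open>inj_on A S\<close> that subspace_0[OF S] A.zero unfolding inj_on_def by metis
    then show ?thesis by simp
  next
    case False
    then have "norm (h /\<^sub>R norm (A h)) \<in> N"
      unfolding N_def using that subspace_scale[OF S] by (auto intro!: exI[of _ "h /\<^sub>R norm (A h)"] simp: A.scale)
    then have "norm h / norm (A h) \<le> inv_opnorm A S" using upper by (simp add: divide_inverse_commute)
    then show ?thesis using False by (simp add: pos_divide_le_eq)
  qed
qed

lemma inv_opnorm_finite_span:
  fixes A :: "'a::real_inner \<Rightarrow> 'b::real_normed_vector"
  assumes "orthonormal_basis \<Lambda> \<phi>" "finite \<Omega>" "\<Omega> \<subseteq> \<Lambda>"
    and A: "bounded_linear A" and inj: "inj_on A (span (\<phi> ` \<Omega>))"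
  shows "inv_opnorm A (span (\<phi> ` \<Omega>)) \<ge> 0"
    and "\<And>h. h \<in> span (\<phi> ` \<Omega>) \<Longrightarrow> norm h \<le> inv_opnorm A (span (\<phi> ` \<Omega>)) * norm (A h)"
proof -
  obtain K where K: "\<And>h. h \<in> span (\<phi> ` \<Omega>) \<Longrightarrow> norm h \<le> K * norm (A h)"
    using finite_span_bounded_below[OF assms] by blast
  note bound = inv_opnorm_bound[OF subspace_span bounded_linear.linear[OF A] inj]
  show "inv_opnorm A (span (\<phi> ` \<Omega>)) \<ge> 0" using bound(1) K by blast
  show "norm h \<le> inv_opnorm A (span (\<phi> ` \<Omega>)) * norm (A h)" if "h \<in> span (\<phi> ` \<Omega>)" for h
    using bound(2) K that by blast
qed

lemma norm_le_inv_opnorm_plus_tail: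
  fixes A :: "'a::{real_inner,complete_space} \<Rightarrow> 'b::real_normed_vector"
  assumes onb: "orthonormal_basis \<Lambda> \<phi>" and \<Omega>: "finite \<Omega>" "\<Omega> \<subseteq> \<Lambda>"
    and "bounded_linear A" and inj: "inj_on A (span (\<phi> ` \<Omega>))"
    and summable: "(\<lambda>l. \<bar>inner (\<phi> l) e\<bar>) summable_on \<Lambda>"
  shows "norm e \<le> inv_opnorm A (span (\<phi> ` \<Omega>)) * norm (A e)
           + (1 + inv_opnorm A (span (\<phi> ` \<Omega>)) * onorm A) * (\<Sum>\<^sub>\<infinity>l\<in>\<Lambda>-\<Omega>. \<bar>inner (\<phi> l) e\<bar>)"
proof -
  interpret A: bounded_linear A by fact
  define M where "M = inv_opnorm A (span (\<phi> ` \<Omega>))"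
  define T where "T = (\<Sum>\<^sub>\<infinity>l\<in>\<Lambda>-\<Omega>. \<bar>inner (\<phi> l) e\<bar>)"
  define g where "g = (\<Sum>k\<in>\<Omega>. inner (\<phi> k) e *\<^sub>R \<phi> k)"
  note M_bound = inv_opnorm_finite_span[OF onb \<Omega> \<open>bounded_linear A\<close> inj, folded M_def]
  have "g \<in> span (\<phi> ` \<Omega>)" unfolding g_def by (intro span_sum span_scale span_base) auto
  have tail: "norm (e - g) \<le> T"
    unfolding g_def T_def by (rule norm_diff_basis_sum_le[OF onb \<Omega> summable])
  have "norm (A g) \<le> norm (A e) + norm (A (e - g))"
    using norm_triangle_ineq4[of "A e" "A (e - g)"] by (simp add: A.diff)
  also have "\<dots> \<le> norm (A e) + onorm A * T"
    using onorm[OF \<open>bounded_linear A\<close>, of "e - g"] mult_left_mono[OF tail onorm_pos_le[OF \<open>bounded_linear A\<close>]]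
    by linarith
  finally have "M * norm (A g) \<le> M * (norm (A e) + onorm A * T)"
    using M_bound(1) by (rule mult_left_mono)
  then have "norm g \<le> M * (norm (A e) + onorm A * T)"
    using M_bound(2)[OF \<open>g \<in> span _\<close>] by linarith
  moreover have "norm e \<le> norm g + norm (e - g)" using norm_triangle_ineq[of g "e - g"] by simp
  ultimately show ?thesis using tail unfolding M_def[symmetric] T_def[symmetric] by (simp add: algebra_simps)
qed

section \<open>Convergence rates\<close>

lemma completing_square_estimate:
  fixes p u :: "'a::real_inner" and q v s :: "'b::real_inner"
  assumes ineq: "1/2 * (norm p)\<^sup>2 + 1/2 * (norm q)\<^sup>2 + \<alpha> * D + \<alpha> * (inner p u + inner q v + inner s v)
                   \<le> 1/2 * (norm s)\<^sup>2"
    and "norm s \<le> \<delta>" "\<alpha> \<ge> 0"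
  shows "1/2 * (norm (p + \<alpha> *\<^sub>R u))\<^sup>2 + 1/2 * (norm (q + \<alpha> *\<^sub>R v))\<^sup>2 + \<alpha> * D \<le> 1/2 * (\<delta> + \<alpha> * norm (u, v))\<^sup>2"
proof -
  have "- inner s v \<le> \<delta> * norm (u, v)"
    using norm_cauchy_schwarz[of "- s" v] mult_mono[OF \<open>norm s \<le> \<delta>\<close> norm_snd_le[of v u]]
      order_trans[OF norm_ge_zero \<open>norm s \<le> \<delta>\<close>] by simp
  then have "- \<alpha> * inner s v \<le> \<alpha> * (\<delta> * norm (u, v))" using mult_left_mono \<open>\<alpha> \<ge> 0\<close> by fastforce
  moreover have "(norm s)\<^sup>2 \<le> \<delta>\<^sup>2" using \<open>norm s \<le> \<delta>\<close> by (simp add: power_mono)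
  moreover have "(norm (u, v))\<^sup>2 = (norm u)\<^sup>2 + (norm v)\<^sup>2" by (simp add: norm_Pair)
  moreover have "(norm (p + \<alpha> *\<^sub>R u))\<^sup>2 = (norm p)\<^sup>2 + 2 * \<alpha> * inner p u + \<alpha>\<^sup>2 * (norm u)\<^sup>2"
    and "(norm (q + \<alpha> *\<^sub>R v))\<^sup>2 = (norm q)\<^sup>2 + 2 * \<alpha> * inner q v + \<alpha>\<^sup>2 * (norm v)\<^sup>2"
    unfolding power2_norm_eq_inner
    by (simp_all add: inner_add_left inner_add_right inner_commute power2_eq_square algebra_simps)
  ultimately show ?thesis using ineq by (simp add: power2_eq_square algebra_simps)
qed

lemma completing_square_bounds:
  fixes p u :: "'a::real_inner" and q v s :: "'b::real_inner"
  assumes ineq: "1/2 * (norm p)\<^sup>2 + 1/2 * (norm q)\<^sup>2 + \<alpha> * D + \<alpha> * (inner p u + inner q v + inner s v)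
                   \<le> 1/2 * (norm s)\<^sup>2"
    and "norm s \<le> \<delta>" "\<alpha> > 0" "D \<ge> 0"
  shows "D \<le> (\<delta> + \<alpha> * norm (u, v))\<^sup>2 / (2 * \<alpha>)"
    and "norm (q + s) \<le> 2 * (\<delta> + \<alpha> * norm (u, v))"
proof -
  define N where "N = norm (u, v)"
  have "1/2 * (norm (p + \<alpha> *\<^sub>R u))\<^sup>2 + 1/2 * (norm (q + \<alpha> *\<^sub>R v))\<^sup>2 + \<alpha> * D \<le> 1/2 * (\<delta> + \<alpha> * N)\<^sup>2"
    unfolding N_def using ineq \<open>norm s \<le> \<delta>\<close> \<open>\<alpha> > 0\<close> by (intro completing_square_estimate) auto
  then have square: "1/2 * (norm (q + \<alpha> *\<^sub>R v))\<^sup>2 + \<alpha> * D \<le> 1/2 * (\<delta> + \<alpha> * N)\<^sup>2"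
    using zero_le_power2[of "norm (p + \<alpha> *\<^sub>R u)"] by linarith
  have "D * (2 * \<alpha>) = 2 * (\<alpha> * D)" by (simp add: algebra_simps)
  then have "D * (2 * \<alpha>) \<le> (\<delta> + \<alpha> * N)\<^sup>2"
    using square zero_le_power2[of "norm (q + \<alpha> *\<^sub>R v)"] by linarith
  then show "D \<le> (\<delta> + \<alpha> * norm (u, v))\<^sup>2 / (2 * \<alpha>)"
    unfolding N_def using \<open>\<alpha> > 0\<close> by (simp add: pos_le_divide_eq)
  have "\<alpha> * D \<ge> 0" using \<open>\<alpha> > 0\<close> \<open>D \<ge> 0\<close> by simp
  then have "(norm (q + \<alpha> *\<^sub>R v))\<^sup>2 \<le> (\<delta> + \<alpha> * N)\<^sup>2" using square by linarith
  moreover have "0 \<le> \<delta> + \<alpha> * N"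
    using \<open>norm s \<le> \<delta>\<close> \<open>\<alpha> > 0\<close> norm_ge_zero[of s] norm_ge_zero[of "(u, v)"]
    unfolding N_def by (smt (verit) mult_nonneg_nonneg)
  ultimately have "norm (q + \<alpha> *\<^sub>R v) \<le> \<delta> + \<alpha> * N" by (rule power2_le_imp_le)
  have "\<alpha> * norm v \<le> \<alpha> * N"
    unfolding N_def by (rule mult_left_mono[OF norm_snd_le]) (use \<open>\<alpha> > 0\<close> in simp)
  moreover have "norm (\<alpha> *\<^sub>R v) = \<alpha> * norm v" using \<open>\<alpha> > 0\<close> by simp
  ultimately have "norm (s - \<alpha> *\<^sub>R v) \<le> \<delta> + \<alpha> * N"
    using norm_triangle_ineq4[of s "\<alpha> *\<^sub>R v"] \<open>norm s \<le> \<delta>\<close> by linarith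
  then show "norm (q + s) \<le> 2 * (\<delta> + \<alpha> * norm (u, v))"
    using norm_triangle_ineq[of "q + \<alpha> *\<^sub>R v" "s - \<alpha> *\<^sub>R v"] \<open>norm (q + \<alpha> *\<^sub>R v) \<le> \<delta> + \<alpha> * N\<close>
    unfolding N_def by simp
qed

lemma ereal_penalized_le_finite:
  assumes le: "ereal a + ereal \<alpha> * enn2ereal X \<le> ereal b + ereal \<alpha> * enn2ereal Y"
    and "\<alpha> > 0" and "Y < \<infinity>"
  shows "X < \<infinity>" and "a + \<alpha> * enn2real X \<le> b + \<alpha> * enn2real Y"
proof -
  show "X < \<infinity>"
  proof (rule ccontr)
    assume "\<not> X < \<infinity>"
    then have "enn2ereal X = \<infinity>" by (metis enn2ereal_top infinity_ennreal_def top.not_eq_extremum)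
    then show False using le \<open>\<alpha> > 0\<close> by (simp add: enn2ereal_eq_enn2real[OF \<open>Y < \<infinity>\<close>])
  qed
  then show "a + \<alpha> * enn2real X \<le> b + \<alpha> * enn2real Y"
    using le by (simp add: enn2ereal_eq_enn2real[OF \<open>Y < \<infinity>\<close>] enn2ereal_eq_enn2real[OF \<open>X < \<infinity>\<close>])
qed

lemma tikhonov_source_condition_estimate:
  fixes W :: "'x::{real_inner,complete_space} \<Rightarrow> 'h::{real_inner,complete_space}"
    and A :: "'h \<Rightarrow> 'y::real_inner" and R :: "'x \<Rightarrow> ennreal" and L :: "'h \<Rightarrow> ennreal"
  assumes "bounded_linear W" "bounded_linear A" and "W xs = hs" "A hs = ys"
    and R_sub: "adjoint W u \<in> subdiff (\<lambda>x. enn2ereal (R x)) xs" and "R xs < \<infinity>"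
    and L_sub: "adjoint A v - u \<in> subdiff (\<lambda>h. enn2ereal (L h)) hs" and "L hs < \<infinity>"
    and "norm (yd - ys) \<le> \<delta>" "\<alpha> > 0"
    and min: "ereal (1/2 * (norm (W xa - ha))\<^sup>2 + 1/2 * (norm (A ha - yd))\<^sup>2) + ereal \<alpha> * enn2ereal (R xa + L ha)
      \<le> ereal (1/2 * (norm (W xs - hs))\<^sup>2 + 1/2 * (norm (A hs - yd))\<^sup>2) + ereal \<alpha> * enn2ereal (R xs + L hs)"
  defines "B \<equiv> (\<delta> + \<alpha> * norm (u, v))\<^sup>2 / (2 * \<alpha>)"
  shows "bregman (\<lambda>x. enn2ereal (R x)) (adjoint W u) xa xs \<le> ereal B"
    and "bregman (\<lambda>h. enn2ereal (L h)) (adjoint A v - u) ha hs \<le> ereal B"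
    and "norm (A (ha - hs)) \<le> 2 * (\<delta> + \<alpha> * norm (u, v))"
proof -
  interpret W: bounded_linear W by fact
  interpret A: bounded_linear A by fact
  define p q s where "p = W xa - ha" and "q = A ha - yd" and "s = yd - ys"
  have "R xs + L hs < \<infinity>" using \<open>R xs < \<infinity>\<close> \<open>L hs < \<infinity>\<close> by (simp add: infinity_ennreal_def)
  note min_finite = ereal_penalized_le_finite[OF min \<open>\<alpha> > 0\<close> this]
  then have "R xa < \<infinity>" "L ha < \<infinity>" by (simp_all add: infinity_ennreal_def)
  define DR where "DR = enn2real (R xa) - enn2real (R xs) - inner (adjoint W u) (xa - xs)"
  define DL where "DL = enn2real (L ha) - enn2real (L hs) - inner (adjoint A v - u) (ha - hs)"
  have "DR \<ge> 0" using subdiff_real_ineq[OF R_sub \<open>R xs < \<infinity>\<close> \<open>R xa < \<infinity>\<close>] by (simp add: DR_def)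
  have "DL \<ge> 0" using subdiff_real_ineq[OF L_sub \<open>L hs < \<infinity>\<close> \<open>L ha < \<infinity>\<close>] by (simp add: DL_def)
  \<comment> \<open>the source conditions turn the linear terms of the Bregman distances into residuals\<close>
  have linear_terms: "inner (adjoint W u) (xa - xs) + inner (adjoint A v - u) (ha - hs)
      = inner p u + inner q v + inner s v"
    using adjoint_inner[OF \<open>bounded_linear W\<close>, of "xa - xs" u] adjoint_inner[OF \<open>bounded_linear A\<close>, of "ha - hs" v]
    by (simp add: p_def q_def s_def W.diff A.diff \<open>W xs = hs\<close> \<open>A hs = ys\<close> inner_diff inner_commute)
  have "norm (W xs - hs) = 0" "norm (A hs - yd) = norm s"
    by (simp_all add: \<open>W xs = hs\<close> \<open>A hs = ys\<close> s_def norm_minus_commute)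
  moreover have "enn2real (R xa + L ha) = enn2real (R xa) + enn2real (L ha)"
    and "enn2real (R xs + L hs) = enn2real (R xs) + enn2real (L hs)"
    using \<open>R xa < \<infinity>\<close> \<open>L ha < \<infinity>\<close> \<open>R xs < \<infinity>\<close> \<open>L hs < \<infinity>\<close>
    by (simp_all add: enn2real_plus infinity_ennreal_def)
  ultimately have "1/2 * (norm p)\<^sup>2 + 1/2 * (norm q)\<^sup>2 + \<alpha> * (enn2real (R xa) + enn2real (L ha))
      \<le> 1/2 * (norm s)\<^sup>2 + \<alpha> * (enn2real (R xs) + enn2real (L hs))"
    using min_finite(2) unfolding p_def[symmetric] q_def[symmetric] by simp
  moreover have "\<alpha> * (DR + DL) + \<alpha> * (inner p u + inner q v + inner s v)
      = \<alpha> * (enn2real (R xa) + enn2real (L ha)) - \<alpha> * (enn2real (R xs) + enn2real (L hs))"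
    unfolding DR_def DL_def linear_terms[symmetric] by (simp add: algebra_simps)
  ultimately have "1/2 * (norm p)\<^sup>2 + 1/2 * (norm q)\<^sup>2 + \<alpha> * (DR + DL) + \<alpha> * (inner p u + inner q v + inner s v)
      \<le> 1/2 * (norm s)\<^sup>2"
    by linarith
  note bounds = completing_square_bounds[OF this _ \<open>\<alpha> > 0\<close>, of \<delta>]
  have "DR + DL \<le> B"
    unfolding B_def using bounds(1) \<open>norm (yd - ys) \<le> \<delta>\<close> \<open>DR \<ge> 0\<close> \<open>DL \<ge> 0\<close> by (simp add: s_def)
  then show "bregman (\<lambda>x. enn2ereal (R x)) (adjoint W u) xa xs \<le> ereal B"
    and "bregman (\<lambda>h. enn2ereal (L h)) (adjoint A v - u) ha hs \<le> ereal B"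
    using \<open>DR \<ge> 0\<close> \<open>DL \<ge> 0\<close> \<open>R xa < \<infinity>\<close> \<open>R xs < \<infinity>\<close> \<open>L ha < \<infinity>\<close> \<open>L hs < \<infinity>\<close>
    by (simp_all add: bregman_real flip: DR_def DL_def)
  have "A (ha - hs) = q + s" by (simp add: q_def s_def A.diff \<open>A hs = ys\<close>)
  then show "norm (A (ha - hs)) \<le> 2 * (\<delta> + \<alpha> * norm (u, v))"
    using bounds(2) \<open>norm (yd - ys) \<le> \<delta>\<close> \<open>DR \<ge> 0\<close> \<open>DL \<ge> 0\<close> by (simp add: s_def)
qed

lemma wl1_tikhonov_error_bound:
  fixes A :: "'h::{real_inner,complete_space} \<Rightarrow> 'y::real_normed_vector"
  assumes onb: "orthonormal_basis \<Lambda> \<phi>" and "a > 0" and \<kappa>_ge: "\<And>l. l \<in> \<Lambda> \<Longrightarrow> \<kappa> l \<ge> a"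
    and \<eta>: "\<eta> \<in> subdiff (\<lambda>h. enn2ereal (wl1 \<Lambda> \<phi> \<kappa> h)) hs"
    and "bounded_linear A" and inj: "inj_on A (HOmega \<phi> (Omega \<Lambda> \<phi> \<kappa> \<eta>))"
    and bregman_le: "bregman (\<lambda>h. enn2ereal (wl1 \<Lambda> \<phi> \<kappa> h)) \<eta> ha hs \<le> ereal B"
    and residual_le: "norm (A (ha - hs)) \<le> E"
  defines "\<Omega> \<equiv> Omega \<Lambda> \<phi> \<kappa> \<eta>"
  defines "M \<equiv> inv_opnorm A (HOmega \<phi> \<Omega>)"
  shows "norm (ha - hs) \<le> M * E + (if \<Lambda> = \<Omega> then 0 else (1 + M * onorm A) / mgap \<Lambda> \<phi> \<kappa> \<eta> * B)"
proof -
  have \<kappa>: "\<And>l. l \<in> \<Lambda> \<Longrightarrow> \<kappa> l \<ge> 0" using \<open>a > 0\<close> \<kappa>_ge by force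
  have "finite \<Omega>" unfolding \<Omega>_def by (rule Omega_finite[OF onb \<open>a > 0\<close> \<kappa>_ge])
  have "\<Omega> \<subseteq> \<Lambda>" by (auto simp: \<Omega>_def Omega_def)
  note finite_hs = wl1_subdiff_finite[OF \<eta>]
  note finite_ha = wl1_bregman_le_real(1)[OF \<eta> bregman_le]
  define T where "T = (\<Sum>\<^sub>\<infinity>l\<in>\<Lambda>-\<Omega>. \<bar>inner (\<phi> l) (ha - hs)\<bar>)"
  have "(\<lambda>l. \<bar>inner (\<phi> l) (ha - hs)\<bar>) summable_on \<Lambda>"
    by (rule wl1_diff_coeff_abs_summable[OF \<open>a > 0\<close> \<kappa>_ge finite_ha finite_hs])
  then have "norm (ha - hs) \<le> M * norm (A (ha - hs)) + (1 + M * onorm A) * T"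
    using norm_le_inv_opnorm_plus_tail[OF onb \<open>finite \<Omega>\<close> \<open>\<Omega> \<subseteq> \<Lambda>\<close> \<open>bounded_linear A\<close>] inj
    unfolding M_def T_def HOmega_def \<Omega>_def by blast
  moreover have "M \<ge> 0"
    unfolding M_def HOmega_def
    using inv_opnorm_finite_span(1)[OF onb \<open>finite \<Omega>\<close> \<open>\<Omega> \<subseteq> \<Lambda>\<close> \<open>bounded_linear A\<close>] inj
    by (simp add: HOmega_def \<Omega>_def)
  then have "M * norm (A (ha - hs)) \<le> M * E" using residual_le by (rule mult_left_mono[rotated])
  moreover have "(1 + M * onorm A) * T \<le> (if \<Lambda> = \<Omega> then 0 else (1 + M * onorm A) / mgap \<Lambda> \<phi> \<kappa> \<eta> * B)"
  proof (cases "\<Lambda> = \<Omega>")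
    case True
    then show ?thesis by (simp add: T_def)
  next
    case False
    have coeff_le: "\<And>l. l \<in> \<Lambda> \<Longrightarrow> \<bar>inner (\<phi> l) \<eta>\<bar> \<le> \<kappa> l"
      using wl1_subdiff_coeff_le[OF onb \<kappa> \<eta>] .
    have "\<Lambda> - \<Omega> \<noteq> {}" using False \<open>\<Omega> \<subseteq> \<Lambda>\<close> by blast
    then have "mgap \<Lambda> \<phi> \<kappa> \<eta> > 0"
      using mgap_pos[of \<Lambda> \<phi> a \<kappa> \<eta>] onb \<open>a > 0\<close> \<kappa>_ge coeff_le unfolding \<Omega>_def by blast
    moreover have "mgap \<Lambda> \<phi> \<kappa> \<eta> * T \<le> B"
      using wl1_bregman_ge_tail[OF onb \<open>a > 0\<close> \<kappa>_ge \<eta> finite_ha] wl1_bregman_le_real(2)[OF \<eta> bregman_le]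
      unfolding T_def \<Omega>_def by linarith
    moreover have "1 + M * onorm A \<ge> 0"
      using \<open>M \<ge> 0\<close> onorm_pos_le[OF \<open>bounded_linear A\<close>] by simp
    ultimately have "(1 + M * onorm A) * T \<le> (1 + M * onorm A) * (B / mgap \<Lambda> \<phi> \<kappa> \<eta>)"
      by (intro mult_left_mono) (simp_all add: pos_le_divide_eq mult.commute)
    then show ?thesis using False by simp
  qed
  ultimately show ?thesis by linarith
qed

lemma sparse_tikhonov_convergence_rate:
  fixes W :: "'x::{real_inner,complete_space} \<Rightarrow> 'h::{real_inner,complete_space}"
    and A :: "'h \<Rightarrow> 'y::real_inner" and R :: "'x \<Rightarrow> ennreal"
  assumes W: "bounded_linear W" and A: "bounded_linear A"
    and onb: "orthonormal_basis \<Lambda> \<phi>" and "a > 0" and \<kappa>_ge: "\<And>l. l \<in> \<Lambda> \<Longrightarrow> \<kappa> l \<ge> a"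
    and "W xs = hs" "A hs = ys" and R_sub: "adjoint W u \<in> subdiff (\<lambda>x. enn2ereal (R x)) xs" and "R xs < \<infinity>"
    and \<eta>: "adjoint A v - u \<in> subdiff (\<lambda>h. enn2ereal (wl1 \<Lambda> \<phi> \<kappa> h)) hs"
    and inj: "inj_on A (HOmega \<phi> (Omega \<Lambda> \<phi> \<kappa> (adjoint A v - u)))"
    and "C > 0" "\<delta> > 0" "norm (yd - ys) \<le> \<delta>"
    and minimal: "ereal (1/2 * (norm (W xa - ha))\<^sup>2 + 1/2 * (norm (A ha - yd))\<^sup>2)
        + ereal (C * \<delta>) * enn2ereal (R xa + wl1 \<Lambda> \<phi> \<kappa> ha)
      \<le> ereal (1/2 * (norm (W xs - hs))\<^sup>2 + 1/2 * (norm (A hs - yd))\<^sup>2)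
        + ereal (C * \<delta>) * enn2ereal (R xs + wl1 \<Lambda> \<phi> \<kappa> hs)"
  defines "c \<equiv> (1 + C * norm (u, v))\<^sup>2 / (2 * C)"
    and "M \<equiv> inv_opnorm A (HOmega \<phi> (Omega \<Lambda> \<phi> \<kappa> (adjoint A v - u)))"
  shows "bregman (\<lambda>x. enn2ereal (R x)) (adjoint W u) xa xs \<le> ereal (c * \<delta>)"
    and "norm (ha - hs) \<le> (2 * M * (1 + C * norm (u, v)) + (if \<Lambda> = Omega \<Lambda> \<phi> \<kappa> (adjoint A v - u) then 0
           else (1 + M * onorm A) / mgap \<Lambda> \<phi> \<kappa> (adjoint A v - u) * c)) * \<delta>"
proof -
  have "C * \<delta> > 0" using \<open>C > 0\<close> \<open>\<delta> > 0\<close> by simp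
  note estimate = tikhonov_source_condition_estimate[OF W A \<open>W xs = hs\<close> \<open>A hs = ys\<close> R_sub \<open>R xs < \<infinity>\<close> \<eta>
      wl1_subdiff_finite[OF \<eta>] \<open>norm (yd - ys) \<le> \<delta>\<close> \<open>C * \<delta> > 0\<close> minimal]
  have B_eq: "(\<delta> + C * \<delta> * norm (u, v))\<^sup>2 / (2 * (C * \<delta>)) = c * \<delta>"
    using \<open>\<delta> > 0\<close> \<open>C > 0\<close> unfolding c_def by (simp add: power2_eq_square field_simps)
  have E_eq: "2 * (\<delta> + C * \<delta> * norm (u, v)) = 2 * \<delta> * (1 + C * norm (u, v))"
    by (simp add: algebra_simps)
  show "bregman (\<lambda>x. enn2ereal (R x)) (adjoint W u) xa xs \<le> ereal (c * \<delta>)"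
    using estimate(1) unfolding B_eq .
  have "norm (ha - hs) \<le> M * (2 * \<delta> * (1 + C * norm (u, v)))
      + (if \<Lambda> = Omega \<Lambda> \<phi> \<kappa> (adjoint A v - u) then 0
         else (1 + M * onorm A) / mgap \<Lambda> \<phi> \<kappa> (adjoint A v - u) * (c * \<delta>))"
    using wl1_tikhonov_error_bound[OF onb \<open>a > 0\<close> \<kappa>_ge \<eta> A inj estimate(2,3)]
    unfolding B_eq E_eq M_def .
  then show "norm (ha - hs) \<le> (2 * M * (1 + C * norm (u, v)) + (if \<Lambda> = Omega \<Lambda> \<phi> \<kappa> (adjoint A v - u) then 0
           else (1 + M * onorm A) / mgap \<Lambda> \<phi> \<kappa> (adjoint A v - u) * c)) * \<delta>"
    by (cases "\<Lambda> = Omega \<Lambda> \<phi> \<kappa> (adjoint A v - u)") (simp_all add: algebra_simps)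
qed

text \<open>Separability, countability of \<Lambda>, convexity and weak lower semicontinuity of R and the
  feasibility assumption only ensure that minimisers exist; the estimate holds for every
  minimiser without them.\<close>

theorem mainTheorem1:
  fixes W :: "'x::{real_inner, complete_space} \<Rightarrow> 'h::{real_inner, complete_space}"
    and A :: "'h \<Rightarrow> 'y::{real_inner, complete_space}"
    and R :: "'x \<Rightarrow> ennreal"
    and \<Lambda> :: "'l set" and \<phi> :: "'l \<Rightarrow> 'h" and \<kappa> :: "'l \<Rightarrow> real" and a :: real
    and xs :: 'x and hs :: 'h and ys :: 'y and u :: 'h and v :: 'y and C :: real
  assumes sepX: "separable_space (euclidean :: 'x topology)"
    and sepH: "separable_space (euclidean :: 'h topology)"
    and sepY: "separable_space (euclidean :: 'y topology)"
    and W_lin: "bounded_linear W" and A_lin: "bounded_linear A"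
    and R_proper: "proper_fun R" and R_convex: "convex_fun R" and R_wlsc: "weakly_lsc R"
    and \<Lambda>_countable: "countable \<Lambda>" and onb: "orthonormal_basis \<Lambda> \<phi>"
    and a_pos: "a > 0" and \<kappa>_ge: "\<forall>l\<in>\<Lambda>. \<kappa> l \<ge> a"
    and feasible: "\<exists>x. R x + wl1 \<Lambda> \<phi> \<kappa> (W x) < \<infinity>"
    and c11: "W xs = hs" "A hs = ys"
    and c12: "adjoint W u \<in> subdiff (\<lambda>x. enn2ereal (R x)) xs"
    and c13: "adjoint A v - u \<in> subdiff (\<lambda>h. enn2ereal (wl1 \<Lambda> \<phi> \<kappa> h)) hs"
    and c14: "inj_on A (HOmega \<phi> (Omega \<Lambda> \<phi> \<kappa> (adjoint A v - u)))"
    and C_pos: "C > 0"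
  shows "\<forall>\<delta> yd \<alpha> xa ha.
     \<delta> > 0 \<and> norm (yd - ys) \<le> \<delta> \<and> \<alpha> = C * \<delta> \<and>
     (\<forall>x h. ereal (1/2 * (norm (W xa - ha))\<^sup>2 + 1/2 * (norm (A ha - yd))\<^sup>2)
               + ereal \<alpha> * enn2ereal (R xa + wl1 \<Lambda> \<phi> \<kappa> ha)
           \<le> ereal (1/2 * (norm (W x - h))\<^sup>2 + 1/2 * (norm (A h - yd))\<^sup>2)
               + ereal \<alpha> * enn2ereal (R x + wl1 \<Lambda> \<phi> \<kappa> h))
     \<longrightarrow>
     (let \<eta> = adjoint A v - u;
          \<Omega> = Omega \<Lambda> \<phi> \<kappa> \<eta>;
          N = sqrt ((norm u)\<^sup>2 + (norm v)\<^sup>2);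
          c = (1 + C * N)\<^sup>2 / (2 * C);
          Ainv = inv_opnorm A (HOmega \<phi> \<Omega>);
          d = 2 * Ainv * (1 + C * N)
              + (if \<Lambda> = \<Omega> then 0 else (1 + Ainv * onorm A) / mgap \<Lambda> \<phi> \<kappa> \<eta> * c)
      in bregman (\<lambda>x. enn2ereal (R x)) (adjoint W u) xa xs \<le> ereal (c * \<delta>)
         \<and> norm (ha - hs) \<le> d * \<delta>)"
proof (intro allI impI)
  fix \<delta> yd \<alpha> xa ha
  assume H: "\<delta> > 0 \<and> norm (yd - ys) \<le> \<delta> \<and> \<alpha> = C * \<delta> \<and>
     (\<forall>x h. ereal (1/2 * (norm (W xa - ha))\<^sup>2 + 1/2 * (norm (A ha - yd))\<^sup>2)
               + ereal \<alpha> * enn2ereal (R xa + wl1 \<Lambda> \<phi> \<kappa> ha)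
           \<le> ereal (1/2 * (norm (W x - h))\<^sup>2 + 1/2 * (norm (A h - yd))\<^sup>2)
               + ereal \<alpha> * enn2ereal (R x + wl1 \<Lambda> \<phi> \<kappa> h))"
  obtain x0 where "R x0 < \<infinity>" using R_proper unfolding proper_fun_def by blast
  then have "R xs < \<infinity>" by (rule subdiff_finite[OF c12])
  note rate = sparse_tikhonov_convergence_rate[OF W_lin A_lin onb a_pos \<kappa>_ge[rule_format] c11 c12
      \<open>R xs < \<infinity>\<close> c13 c14 C_pos, of \<delta> yd xa ha]
  show "let \<eta> = adjoint A v - u; \<Omega> = Omega \<Lambda> \<phi> \<kappa> \<eta>; N = sqrt ((norm u)\<^sup>2 + (norm v)\<^sup>2);
      c = (1 + C * N)\<^sup>2 / (2 * C); Ainv = inv_opnorm A (HOmega \<phi> \<Omega>);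
      d = 2 * Ainv * (1 + C * N) + (if \<Lambda> = \<Omega> then 0 else (1 + Ainv * onorm A) / mgap \<Lambda> \<phi> \<kappa> \<eta> * c)
    in bregman (\<lambda>x. enn2ereal (R x)) (adjoint W u) xa xs \<le> ereal (c * \<delta>) \<and> norm (ha - hs) \<le> d * \<delta>"
    using rate H unfolding Let_def norm_Pair[symmetric] by blast
qed

end
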